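(* Let $E=(E,q)$ be a formed space. (1) For any $W\in\mathcal{P}^\omega(E)$, the map $G(E)_W\to\operatorname{GL}(W)_{R(E)}\times G(W^\perp/W)$ sending $f$ to its restriction to $W$ and its induced map on $W^\perp/W$ is split surjective. (2) For any $U\in\mathcal{P}^\omega(E)$ and $W\in\mathcal{P}^\omega(E,U)$, the analogous map $A(E,U)_W\to A^T(W,W\cap U^\perp)_{\mathrm{id}_{R(E)}}\times G(W^\perp/W)$ is split surjective.
   Context: Formed spaces over a field with involution $\sigma$ ($\bar c=\sigma(c)$), $\varepsilon$ ($\varepsilon\bar\varepsilon=1$), $\Lambda$ ($\{c-\varepsilon\bar c\}\le\Lambda\le\{c:c+\varepsilon\bar c=0\}$): a form on finite-dimensional $E$ is a sesquilinear map modulo those $f$ with $f(v,v)\in\Lambda$, $f(w,v)=-\varepsilon\overline{f(v,w)}$; $\omega_q(v,w)=q(v,w)+\varepsilon\overline{q(w,v)}$, $Q_q(v)=q(v,v)+\Lambda$; radical $R(E)=\{v:\omega_q(E,v)=0,Q_q(v)=0\}$; $U^\perp=\{v:\omega_q(v,U)=0\}$; isotropic means $\omega_q,Q_q$ vanish. $\mathcal{P}^\omega(E)$: isotropic $W$ with $R(E)<W<E$; $\mathcal{P}^\omega(E,U)$: those also satisfying $W+U^\perp=E$. For $W$ isotropic, $W^\perp/W$ carries the unique form making $W^\perp\to W^\perp/W$ an isometry. $G(E)$ is the group of bijective isometries, $G(E)_W$ its stabilizer of $W$; $A(E,U)$ the subgroup fixing $U$ pointwise, $A(E,U)_W$ its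 stabilizer of $W$. $\operatorname{GL}(W)_{R(E)}$ is the subgroup of $\operatorname{GL}(W)$ preserving $R(E)$; $A^T(W,W_0)=\{g\in\operatorname{GL}(W):g(w)-w\in W_0\ \forall w\}$, and the subscript $\mathrm{id}_{R(E)}$ denotes the subgroup restricting to the identity on $R(E)$. *)

theory Defs
  imports Complex_Main "HOL-Algebra.Bij"
begin

text \<open>
  Setting: a field 'k with involution sig, a unit eps with eps * sig eps = 1,
  a form parameter Lam; the vector space E is the whole type 'v with scalar
  multiplication s (a finite-dimensional 'k-vector space).  A form is
  represented by a sesquilinear map q (conjugate-linear in the first
  argument, linear in the second); everything below depends only on the
  equivalence class of q.
\<close>

definition field_involution :: "('k::field \<Rightarrow> 'k) \<Rightarrow> bool" where
  "field_involution sig \<longleftrightarrow>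
     (\<forall>a b. sig (a + b) = sig a + sig b) \<and> (\<forall>a b. sig (a * b) = sig a * sig b) \<and>
     (\<forall>a. sig (sig a) = a)"

definition form_parameter :: "('k::field \<Rightarrow> 'k) \<Rightarrow> 'k \<Rightarrow> 'k set \<Rightarrow> bool" where
  "form_parameter sig eps Lam \<longleftrightarrow>
     0 \<in> Lam \<and> (\<forall>a\<in>Lam. \<forall>b\<in>Lam. a + b \<in> Lam) \<and> (\<forall>a\<in>Lam. - a \<in> Lam) \<and>
     {c - eps * sig c | c. True} \<subseteq> Lam \<and> Lam \<subseteq> {c. c + eps * sig c = 0}"

definition sesquilinear :: "('k::field \<Rightarrow> 'v::ab_group_add \<Rightarrow> 'v) \<Rightarrow> ('k \<Rightarrow> 'k) \<Rightarrow> ('v \<Rightarrow> 'v \<Rightarrow> 'k) \<Rightarrow> bool" where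
  "sesquilinear s sig q \<longleftrightarrow>
     (\<forall>a v v' w. q (s a v + v') w = sig a * q v w + q v' w) \<and>
     (\<forall>a v w w'. q v (s a w + w') = q v w * a + q v w')"

definition formed_space ::
  "('k::field \<Rightarrow> 'v::ab_group_add \<Rightarrow> 'v) \<Rightarrow> ('k \<Rightarrow> 'k) \<Rightarrow> 'k \<Rightarrow> 'k set \<Rightarrow> ('v \<Rightarrow> 'v \<Rightarrow> 'k) \<Rightarrow> bool" where
  "formed_space s sig eps Lam q \<longleftrightarrow>
     vector_space s \<and> (\<exists>B. finite B \<and> module.span s B = UNIV) \<and>
     field_involution sig \<and> eps * sig eps = 1 \<and> form_parameter sig eps Lam \<and>
     sesquilinear s sig q"

text \<open>Two sesquilinear maps define the same form iff their difference is trivial.\<close>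
definition form_equiv :: "('k::field \<Rightarrow> 'k) \<Rightarrow> 'k \<Rightarrow> 'k set \<Rightarrow> ('v \<Rightarrow> 'v \<Rightarrow> 'k) \<Rightarrow> ('v \<Rightarrow> 'v \<Rightarrow> 'k) \<Rightarrow> bool" where
  "form_equiv sig eps Lam q q' \<longleftrightarrow>
     (\<forall>v. q v v - q' v v \<in> Lam) \<and>
     (\<forall>v w. q w v - q' w v = - eps * sig (q v w - q' v w))"

definition omega :: "('k::field \<Rightarrow> 'k) \<Rightarrow> 'k \<Rightarrow> ('v \<Rightarrow> 'v \<Rightarrow> 'k) \<Rightarrow> 'v \<Rightarrow> 'v \<Rightarrow> 'k" where
  "omega sig eps q v w = q v w + eps * sig (q w v)"

text \<open>Q_q(v) = Q_q(w) in k/Lam is expressed as q v v - q w w \<in> Lam; Q_q(v) = 0 as q v v \<in> Lam.\<close>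

definition radical :: "('k::field \<Rightarrow> 'k) \<Rightarrow> 'k \<Rightarrow> 'k set \<Rightarrow> ('v \<Rightarrow> 'v \<Rightarrow> 'k) \<Rightarrow> 'v set" where
  "radical sig eps Lam q = {v. (\<forall>u. omega sig eps q u v = 0) \<and> q v v \<in> Lam}"

definition perp :: "('k::field \<Rightarrow> 'k) \<Rightarrow> 'k \<Rightarrow> ('v \<Rightarrow> 'v \<Rightarrow> 'k) \<Rightarrow> 'v set \<Rightarrow> 'v set" where
  "perp sig eps q U = {v. \<forall>u\<in>U. omega sig eps q v u = 0}"

definition isotropic :: "('k::field \<Rightarrow> 'v::ab_group_add \<Rightarrow> 'v) \<Rightarrow> ('k \<Rightarrow> 'k) \<Rightarrow> 'k \<Rightarrow> 'k set \<Rightarrow> ('v \<Rightarrow> 'v \<Rightarrow> 'k) \<Rightarrow> 'v set \<Rightarrow> bool" where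
  "isotropic s sig eps Lam q W \<longleftrightarrow> module.subspace s W \<and>
     (\<forall>v\<in>W. \<forall>w\<in>W. omega sig eps q v w = 0) \<and> (\<forall>v\<in>W. q v v \<in> Lam)"

definition Pomega :: "('k::field \<Rightarrow> 'v::ab_group_add \<Rightarrow> 'v) \<Rightarrow> ('k \<Rightarrow> 'k) \<Rightarrow> 'k \<Rightarrow> 'k set \<Rightarrow> ('v \<Rightarrow> 'v \<Rightarrow> 'k) \<Rightarrow> 'v set set" where
  "Pomega s sig eps Lam q = {W. isotropic s sig eps Lam q W \<and>
      radical sig eps Lam q \<subset> W \<and> W \<subset> UNIV}"

definition PomegaU :: "('k::field \<Rightarrow> 'v::ab_group_add \<Rightarrow> 'v) \<Rightarrow> ('k \<Rightarrow> 'k) \<Rightarrow> 'k \<Rightarrow> 'k set \<Rightarrow> ('v \<Rightarrow> 'v \<Rightarrow> 'k) \<Rightarrow> 'v set \<Rightarrow> 'v set set" where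
  "PomegaU s sig eps Lam q U = {W \<in> Pomega s sig eps Lam q.
      \<forall>x. \<exists>w\<in>W. \<exists>u\<in>perp sig eps q U. x = w + u}"

definition is_linear_on :: "('k::field \<Rightarrow> 'v::ab_group_add \<Rightarrow> 'v) \<Rightarrow> 'v set \<Rightarrow> ('v \<Rightarrow> 'v) \<Rightarrow> bool" where
  "is_linear_on s W f \<longleftrightarrow> (\<forall>a. \<forall>x\<in>W. \<forall>y\<in>W. f (s a x + y) = s a (f x) + f y)"

definition isometry :: "('k::field \<Rightarrow> 'v::ab_group_add \<Rightarrow> 'v) \<Rightarrow> ('k \<Rightarrow> 'k) \<Rightarrow> 'k \<Rightarrow> 'k set \<Rightarrow> ('v \<Rightarrow> 'v \<Rightarrow> 'k) \<Rightarrow> ('v \<Rightarrow> 'v) \<Rightarrow> bool" where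
  "isometry s sig eps Lam q f \<longleftrightarrow> is_linear_on s UNIV f \<and>
     form_equiv sig eps Lam (\<lambda>v w. q (f v) (f w)) q"

definition GE_stab :: "('k::field \<Rightarrow> 'v::ab_group_add \<Rightarrow> 'v) \<Rightarrow> ('k \<Rightarrow> 'k) \<Rightarrow> 'k \<Rightarrow> 'k set \<Rightarrow> ('v \<Rightarrow> 'v \<Rightarrow> 'k) \<Rightarrow> 'v set \<Rightarrow> ('v \<Rightarrow> 'v) monoid" where
  "GE_stab s sig eps Lam q W = BijGroup UNIV
     \<lparr>carrier := {f \<in> Bij UNIV. isometry s sig eps Lam q f \<and> f ` W = W}\<rparr>"

definition AEU_stab :: "('k::field \<Rightarrow> 'v::ab_group_add \<Rightarrow> 'v) \<Rightarrow> ('k \<Rightarrow> 'k) \<Rightarrow> 'k \<Rightarrow> 'k set \<Rightarrow> ('v \<Rightarrow> 'v \<Rightarrow> 'k) \<Rightarrow> 'v set \<Rightarrow> 'v set \<Rightarrow> ('v \<Rightarrow> 'v) monoid" where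
  "AEU_stab s sig eps Lam q U W = BijGroup UNIV
     \<lparr>carrier := {f \<in> Bij UNIV. isometry s sig eps Lam q f \<and> (\<forall>u\<in>U. f u = u) \<and> f ` W = W}\<rparr>"

definition GL_pres :: "('k::field \<Rightarrow> 'v::ab_group_add \<Rightarrow> 'v) \<Rightarrow> 'v set \<Rightarrow> 'v set \<Rightarrow> ('v \<Rightarrow> 'v) monoid" where
  "GL_pres s W R = BijGroup W
     \<lparr>carrier := {g \<in> Bij W. is_linear_on s W g \<and> g ` R = R}\<rparr>"

definition AT_id :: "('k::field \<Rightarrow> 'v::ab_group_add \<Rightarrow> 'v) \<Rightarrow> 'v set \<Rightarrow> 'v set \<Rightarrow> 'v set \<Rightarrow> ('v \<Rightarrow> 'v) monoid" where
  "AT_id s W W0 R = BijGroup W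
     \<lparr>carrier := {g \<in> Bij W. is_linear_on s W g \<and> (\<forall>w\<in>W. g w - w \<in> W0) \<and> (\<forall>r\<in>R. g r = r)}\<rparr>"

definition coset :: "'v::ab_group_add \<Rightarrow> 'v set \<Rightarrow> 'v set" where
  "coset x W = (\<lambda>w. x + w) ` W"

definition quot :: "('k::field \<Rightarrow> 'k) \<Rightarrow> 'k \<Rightarrow> ('v::ab_group_add \<Rightarrow> 'v \<Rightarrow> 'k) \<Rightarrow> 'v set \<Rightarrow> 'v set set" where
  "quot sig eps q W = {coset x W | x. x \<in> perp sig eps q W}"

definition quot_linear :: "('k::field \<Rightarrow> 'v::ab_group_add \<Rightarrow> 'v) \<Rightarrow> ('k \<Rightarrow> 'k) \<Rightarrow> 'k \<Rightarrow> ('v \<Rightarrow> 'v \<Rightarrow> 'k) \<Rightarrow> 'v set \<Rightarrow> ('v set \<Rightarrow> 'v set) \<Rightarrow> bool" where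
  "quot_linear s sig eps q W h \<longleftrightarrow>
     (\<forall>a x y x' y'. x \<in> perp sig eps q W \<longrightarrow> y \<in> perp sig eps q W \<longrightarrow>
        x' \<in> h (coset x W) \<longrightarrow> y' \<in> h (coset y W) \<longrightarrow>
        h (coset (s a x + y) W) = coset (s a x' + y') W)"

text \<open>Isometries of W^perp/W with its induced form (the unique form for which the
  projection W^perp \<rightarrow> W^perp/W is an isometry): omega and Q of the induced form are
  computed on representatives, and an isometry is the same as a map preserving both.\<close>
definition quot_isometry :: "('k::field \<Rightarrow> 'k) \<Rightarrow> 'k \<Rightarrow> 'k set \<Rightarrow> ('v::ab_group_add \<Rightarrow> 'v \<Rightarrow> 'k) \<Rightarrow> 'v set \<Rightarrow> ('v set \<Rightarrow> 'v set) \<Rightarrow> bool" where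
  "quot_isometry sig eps Lam q W h \<longleftrightarrow>
     (\<forall>x y x' y'. x \<in> perp sig eps q W \<longrightarrow> y \<in> perp sig eps q W \<longrightarrow>
        x' \<in> h (coset x W) \<longrightarrow> y' \<in> h (coset y W) \<longrightarrow>
        omega sig eps q x' y' = omega sig eps q x y \<and> q x' x' - q x x \<in> Lam)"

definition G_quot :: "('k::field \<Rightarrow> 'v::ab_group_add \<Rightarrow> 'v) \<Rightarrow> ('k \<Rightarrow> 'k) \<Rightarrow> 'k \<Rightarrow> 'k set \<Rightarrow> ('v \<Rightarrow> 'v \<Rightarrow> 'k) \<Rightarrow> 'v set \<Rightarrow> ('v set \<Rightarrow> 'v set) monoid" where
  "G_quot s sig eps Lam q W = BijGroup (quot sig eps q W)
     \<lparr>carrier := {h \<in> Bij (quot sig eps q W).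
                    quot_linear s sig eps q W h \<and> quot_isometry sig eps Lam q W h}\<rparr>"

definition res_ind :: "('k::field \<Rightarrow> 'k) \<Rightarrow> 'k \<Rightarrow> ('v::ab_group_add \<Rightarrow> 'v \<Rightarrow> 'k) \<Rightarrow> 'v set \<Rightarrow> ('v \<Rightarrow> 'v) \<Rightarrow> ('v \<Rightarrow> 'v) \<times> ('v set \<Rightarrow> 'v set)" where
  "res_ind sig eps q W f = (restrict f W, restrict (\<lambda>C. f ` C) (quot sig eps q W))"

definition split_surjective :: "('a, 'c) monoid_scheme \<Rightarrow> ('b, 'd) monoid_scheme \<Rightarrow> ('a \<Rightarrow> 'b) \<Rightarrow> bool" where
  "split_surjective G H p \<longleftrightarrow> p \<in> hom G H \<and> (\<exists>t \<in> hom H G. \<forall>y \<in> carrier H. p (t y) = y)"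

end

theory Submission
  imports Defs
begin

(*
  Choose a complement C of W in W^perp and a partner Y of W: a subspace with E = W^perp + Y
  (direct), on which omega and Q vanish, which is omega-orthogonal to C, and such that y maps
  to omega(y, -) identifies Y with the linear forms on W vanishing on R(E).  Then E = W + C + Y
  (direct) and C is isometric to W^perp/W.  For g in GL(W)_R(E) and h in G(W^perp/W), the map
  acting as g on W, as the lift of h on C and as the omega-contragredient of g on Y is an
  isometry of E stabilising W; it restricts to g, induces h, and is multiplicative in (g, h),
  which splits (1).

  The partner is built from a complement X0 of W^perp and a family in W dual to a basis of X0:
  a linear T : X0 -> W is chosen so that the shear x - T x kills omega and Q, and Y is the
  image of the shear.  For (2) write U = R(E) + U1 (direct); U1 meets W^perp trivially because
  W + U^perp = E, so X0, and hence Y, can be taken to contain U1.  If g fixes R(E) and g - id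
  maps W into U^perp, the contragredient of g fixes U1, so the lifted isometry fixes U.
*)

definition proj_along :: "'v::ab_group_add set \<Rightarrow> 'v set \<Rightarrow> 'v \<Rightarrow> 'v" where
  "proj_along A B v = (THE a. a \<in> A \<and> v - a \<in> B)"

definition semilinear_on ::
  "('k::field \<Rightarrow> 'v::ab_group_add \<Rightarrow> 'v) \<Rightarrow> ('k \<Rightarrow> 'k) \<Rightarrow> 'v set \<Rightarrow> ('v \<Rightarrow> 'k) \<Rightarrow> bool" where
  "semilinear_on s \<tau> X f \<longleftrightarrow> (\<forall>a. \<forall>x\<in>X. \<forall>y\<in>X. f (s a x + y) = \<tau> a * f x + f y)"

lemma mem_coset_iff: "z \<in> coset x A \<longleftrightarrow> z - x \<in> A"
  unfolding coset_def by (auto intro: image_eqI[of _ _ "z - x"])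

lemma image_coset:
  assumes "\<And>x y. f (x + y) = f x + f y" "f ` A = A"
  shows "f ` coset x A = coset (f x) A"
proof -
  have "f ` coset x A = (\<lambda>w. f x + w) ` f ` A"
    unfolding coset_def image_image using assms(1) by simp
  then show ?thesis unfolding coset_def assms(2) .
qed

lemma bij_image_invariant:
  assumes "bij f" "\<And>x. f x \<in> S \<longleftrightarrow> x \<in> S"
  shows "f ` S = S"
proof (intro equalityI subsetI)
  fix x assume "x \<in> S"
  moreover obtain y where "x = f y" using assms(1) by (metis bij_pointE)
  ultimately show "x \<in> f ` S" using assms(2) by blast
qed (use assms(2) in blast)

lemma carrier_GL_pres:
  "carrier (GL_pres s W R) = {g \<in> Bij W. is_linear_on s W g \<and> g ` R = R}"
  by (simp add: GL_pres_def)

lemma carrier_G_quot: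
  "carrier (G_quot s sig eps Lam q W) = {h \<in> Bij (quot sig eps q W).
     quot_linear s sig eps q W h \<and> quot_isometry sig eps Lam q W h}"
  by (simp add: G_quot_def)

lemma mult_BijGroup: "f \<in> Bij S \<Longrightarrow> g \<in> Bij S \<Longrightarrow> f \<otimes>\<^bsub>BijGroup S\<^esub> g = compose S f g"
  by (simp add: BijGroup_def)

lemma mult_G_quot:
  "h1 \<in> carrier (G_quot s sig eps Lam q W) \<Longrightarrow> h2 \<in> carrier (G_quot s sig eps Lam q W) \<Longrightarrow>
    h1 \<otimes>\<^bsub>G_quot s sig eps Lam q W\<^esub> h2 = compose (quot sig eps q W) h1 h2"
  unfolding carrier_G_quot G_quot_def by (simp add: mult_BijGroup)

context vector_space
begin

lemma proj_along_eqI: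
  assumes "subspace A" "subspace B" "A \<inter> B = {0}" "a \<in> A" "v - a \<in> B"
  shows "proj_along A B v = a"
  unfolding proj_along_def
proof (rule the_equality)
  show "a \<in> A \<and> v - a \<in> B" using assms by blast
  fix a' assume a': "a' \<in> A \<and> v - a' \<in> B"
  have "a' - a \<in> A" using a' assms subspace_diff by blast
  moreover have "a' - a \<in> B"
    using subspace_diff[OF assms(2) assms(5), of "v - a'"] a' by (simp add: algebra_simps)
  ultimately show "a' = a" using assms(3) by (metis IntI singletonD eq_iff_diff_eq_0)
qed

lemma coset_self: "subspace A \<Longrightarrow> x \<in> coset x A"
  by (simp add: mem_coset_iff subspace_0)

lemma coset_eq_iff:
  assumes "subspace A"
  shows "coset x A = coset y A \<longleftrightarrow> x - y \<in> A"
proof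
  assume "coset x A = coset y A"
  then show "x - y \<in> A" using coset_self[OF assms, of x] by (simp add: mem_coset_iff)
next
  assume d: "x - y \<in> A"
  have "z - x \<in> A \<longleftrightarrow> z - y \<in> A" for z
  proof
    assume "z - x \<in> A"
    from subspace_add[OF assms this d] show "z - y \<in> A" by simp
  next
    assume "z - y \<in> A"
    from subspace_diff[OF assms this d] show "z - x \<in> A" by simp
  qed
  then show "coset x A = coset y A" by (auto simp: mem_coset_iff)
qed

lemma is_linear_on_add: "is_linear_on scale X f \<Longrightarrow> x \<in> X \<Longrightarrow> y \<in> X \<Longrightarrow> f (x + y) = f x + f y"
  unfolding is_linear_on_def by (metis scale_one)

lemma is_linear_on_0:
  fixes f :: "'b \<Rightarrow> 'b"
  shows "is_linear_on scale X f \<Longrightarrow> subspace X \<Longrightarrow> f 0 = 0"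
  using is_linear_on_add[of X f 0 0] subspace_0 by fastforce

lemma is_linear_on_inv_into:
  assumes "is_linear_on scale X f" "bij_betw f X X" "subspace X"
  shows "is_linear_on scale X (inv_into X f)"
  unfolding is_linear_on_def
proof (intro allI ballI)
  fix a x y assume xy: "x \<in> X" "y \<in> X"
  let ?g = "inv_into X f"
  have g: "?g x \<in> X" "?g y \<in> X" "f (?g x) = x" "f (?g y) = y"
    using xy assms(2) bij_betw_inv_into_right[OF assms(2)] by (auto intro: inv_into_into simp: bij_betw_def)
  have "scale a (?g x) + ?g y \<in> X" using g assms(3) by (intro subspace_add subspace_scale)
  moreover have "f (scale a (?g x) + ?g y) = scale a x + y"
    using assms(1) g unfolding is_linear_on_def by simp
  ultimately show "?g (scale a x + y) = scale a (?g x) + ?g y"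
    using bij_betw_inv_into_left[OF assms(2)] by metis
qed

lemma semilinear_on_sum:
  assumes "semilinear_on scale \<tau> X f" "\<tau> 1 = 1" "subspace X" "finite I" "\<And>i. i \<in> I \<Longrightarrow> v i \<in> X"
  shows "f (\<Sum>i\<in>I. scale (c i) (v i)) = (\<Sum>i\<in>I. \<tau> (c i) * f (v i))"
  using assms(4,5)
proof (induction I rule: finite_induct)
  case empty
  have "f (scale 1 0 + 0) = \<tau> 1 * f 0 + f 0"
    using assms(1,3) subspace_0 unfolding semilinear_on_def by blast
  then have "f 0 = f 0 + f 0" using assms(2) by (simp only: scale_zero_right add_0_right mult_1)
  then show ?case by (metis add_cancel_left_right sum.empty)
next
  case (insert i I)
  have "(\<Sum>i\<in>I. scale (c i) (v i)) \<in> X"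
    using insert.prems by (auto intro!: subspace_sum[OF assms(3)] subspace_scale[OF assms(3)])
  then show ?case using insert assms(1) unfolding semilinear_on_def by simp
qed

lemma semilinear_on_add:
  assumes "semilinear_on scale \<tau> X f" "\<tau> 1 = 1" "x \<in> X" "y \<in> X"
  shows "f (x + y) = f x + f y"
  using assms unfolding semilinear_on_def by (metis scale_one mult_1)

end

locale finitely_spanned = vector_space +
  assumes finitely_spanned: "\<exists>S. finite S \<and> span S = UNIV"
begin

lemma subspace_finite_basis:
  assumes "subspace X"
  obtains B where "finite B" "B \<subseteq> X" "independent B" "span B = X"
proof -
  obtain B where B: "B \<subseteq> X" "independent B" "X \<subseteq> span B" by (metis basis_exists)
  obtain S where S: "finite S" "span S = UNIV" using finitely_spanned by blast
  have "finite B" using independent_span_bound[OF S(1) B(2)] S(2) by auto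
  moreover have "span B = X" using B assms by (metis span_subspace)
  ultimately show ?thesis using B that by blast
qed

lemma span_insert_inter_eq_0:
  assumes "subspace X" "subspace B" "X \<inter> B = {0}" "\<not> (\<exists>x\<in>X. \<exists>b\<in>B. v = x + b)"
  shows "span (insert v X) \<inter> B = {0}"
proof -
  have "y = 0" if y: "y \<in> span (insert v X)" "y \<in> B" for y
  proof -
    have "span X = X" using assms(1) by (rule span_eq_iff[THEN iffD2])
    then obtain k where k: "y - scale k v \<in> X" using y(1) unfolding span_insert by blast
    show ?thesis
    proof (cases "k = 0")
      case True
      then show ?thesis using k y assms(3) by auto
    next
      case False
      have "v = scale (- inverse k) (y - scale k v) + scale (inverse k) y"
        using False by (simp add: algebra_simps)
      moreover have "scale (- inverse k) (y - scale k v) \<in> X" using k assms(1) subspace_scale by blast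
      moreover have "scale (inverse k) y \<in> B" using y assms(2) subspace_scale by blast
      ultimately show ?thesis using assms(4) by blast
    qed
  qed
  then show ?thesis using assms(2) span_zero subspace_0 by auto
qed

text \<open>Greedy extension: add the vectors of \<open>S\<close> one at a time whenever they are not yet in \<open>X + B\<close>.\<close>
lemma complement_covering:
  assumes "finite S" "subspace A" "subspace B" "A \<inter> B = {0}"
  shows "\<exists>X. subspace X \<and> A \<subseteq> X \<and> X \<inter> B = {0} \<and> (\<forall>v\<in>S. \<exists>x\<in>X. \<exists>b\<in>B. v = x + b)
           \<and> X \<subseteq> span (A \<union> S)"
  using assms(1)
proof (induction S rule: finite_induct)
  case empty
  then show ?case using assms span_superset by (intro exI[of _ A]) auto
next
  case (insert v S)
  then obtain X where X: "subspace X" "A \<subseteq> X" "X \<inter> B = {0}"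
    "\<forall>v\<in>S. \<exists>x\<in>X. \<exists>b\<in>B. v = x + b" "X \<subseteq> span (A \<union> S)"
    by blast
  have span_mono': "span (A \<union> S) \<subseteq> span (A \<union> insert v S)" by (rule span_mono) auto
  show ?case
  proof (cases "\<exists>x\<in>X. \<exists>b\<in>B. v = x + b")
    case True
    then show ?thesis using X span_mono' by (intro exI[of _ X]) auto
  next
    case False
    let ?X = "span (insert v X)"
    have "?X \<inter> B = {0}" using span_insert_inter_eq_0[OF X(1) assms(3) X(3) False] .
    moreover have "\<forall>u\<in>insert v S. \<exists>x\<in>?X. \<exists>b\<in>B. u = x + b"
    proof
      fix u assume "u \<in> insert v S"
      then consider "u = v" | "\<exists>x\<in>X. \<exists>b\<in>B. u = x + b" using X(4) by blast
      then show "\<exists>x\<in>?X. \<exists>b\<in>B. u = x + b"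
      proof cases
        case 1
        then show ?thesis using subspace_0[OF assms(3)] span_base[of v "insert v X"] by force
      next
        case 2
        then show ?thesis using span_superset[of "insert v X"] by blast
      qed
    qed
    moreover have "?X \<subseteq> span (A \<union> insert v S)"
      using X(5) span_mono' by (intro span_minimal) (auto intro: span_base)
    moreover have "A \<subseteq> ?X" using X(2) span_superset by blast
    ultimately show ?thesis by (intro exI[of _ ?X]) auto
  qed
qed

lemma complement_containing:
  assumes "subspace A" "subspace B" "A \<inter> B = {0}"
  obtains X where "subspace X" "A \<subseteq> X" "X \<inter> B = {0}" "\<forall>v. \<exists>x\<in>X. \<exists>b\<in>B. v = x + b"
proof -
  obtain S where S: "finite S" "span S = UNIV" using finitely_spanned by blast
  from complement_covering[OF S(1) assms] obtain X where
    X: "subspace X" "A \<subseteq> X" "X \<inter> B = {0}" "\<forall>v\<in>S. \<exists>x\<in>X. \<exists>b\<in>B. v = x + b"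
    by blast
  let ?XB = "{x + b |x b. x \<in> X \<and> b \<in> B}"
  have "subspace ?XB" using subspace_sums[OF X(1) assms(2)] .
  moreover have "S \<subseteq> ?XB" using X(4) by blast
  ultimately have "span S \<subseteq> ?XB" by (rule span_minimal[rotated])
  then have "v \<in> ?XB" for v unfolding S(2) by blast
  then have "\<forall>v. \<exists>x\<in>X. \<exists>b\<in>B. v = x + b" by blast
  with X(1-3) show ?thesis by (rule that)
qed

lemma complement_within:
  assumes "subspace A" "subspace D"
  obtains C where "subspace C" "C \<subseteq> D" "C \<inter> A = {0}" "\<forall>v\<in>D. \<exists>a\<in>A. \<exists>c\<in>C. v = a + c"
proof -
  obtain S where S: "finite S" "S \<subseteq> D" "independent S" "span S = D"
    by (rule subspace_finite_basis[OF assms(2)])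
  have "{0} \<inter> A = {0}" using subspace_0[OF assms(1)] by blast
  from complement_covering[OF S(1) subspace_single_0 assms(1) this] obtain X where
    X: "subspace X" "X \<inter> A = {0}" "\<forall>v\<in>S. \<exists>x\<in>X. \<exists>a\<in>A. v = x + a" "X \<subseteq> span ({0} \<union> S)"
    by blast
  let ?XA = "{x + a |x a. x \<in> X \<and> a \<in> A}"
  have "subspace ?XA" using subspace_sums[OF X(1) assms(1)] .
  moreover have "S \<subseteq> ?XA" using X(3) by blast
  ultimately have "span S \<subseteq> ?XA" by (rule span_minimal[rotated])
  have decomp: "\<forall>v\<in>D. \<exists>a\<in>A. \<exists>c\<in>X. v = a + c"
  proof
    fix v assume "v \<in> D"
    from \<open>v \<in> D\<close> \<open>span S \<subseteq> ?XA\<close> obtain x a where "x \<in> X" "a \<in> A" "v = x + a"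
      unfolding S(4) by blast
    then show "\<exists>a\<in>A. \<exists>c\<in>X. v = a + c" by (metis add.commute)
  qed
  have "X \<subseteq> D"
  proof -
    have "span ({0} \<union> S) \<subseteq> D"
      using S(2) subspace_0[OF assms(2)] by (intro span_minimal[OF _ assms(2)]) auto
    with X(4) show ?thesis by (rule order_trans)
  qed
  from that[OF X(1) this X(2) decomp] show ?thesis .
qed

end

section \<open>Formed spaces\<close>

locale formed_vspace =
  fixes s :: "'k::field \<Rightarrow> 'v::ab_group_add \<Rightarrow> 'v"
    and sig :: "'k \<Rightarrow> 'k" and eps :: 'k and Lam :: "'k set"
    and q :: "'v \<Rightarrow> 'v \<Rightarrow> 'k"
  assumes formed: "formed_space s sig eps Lam q"
begin

sublocale finitely_spanned s
  using formed unfolding formed_space_def finitely_spanned_def finitely_spanned_axioms_def by auto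

abbreviation \<omega> where "\<omega> \<equiv> omega sig eps q"
abbreviation Rad where "Rad \<equiv> radical sig eps Lam q"
abbreviation orth where "orth \<equiv> perp sig eps q"

lemma sig_add: "sig (a + b) = sig a + sig b"
  and sig_mult: "sig (a * b) = sig a * sig b"
  and sig_sig [simp]: "sig (sig a) = a"
  using formed unfolding formed_space_def field_involution_def by auto

lemma sig_0 [simp]: "sig 0 = 0"
  using sig_add[of 0 0] by (metis add_cancel_right_right add_0)

lemma sig_eq_0_iff [simp]: "sig a = 0 \<longleftrightarrow> a = 0"
  by (metis sig_0 sig_sig)

lemma sig_minus: "sig (- a) = - sig a"
  using sig_add[of a "- a"] by (simp add: eq_neg_iff_add_eq_0 add.commute)

lemma sig_diff: "sig (a - b) = sig a - sig b"
  using sig_add[of "a - b" b] by (simp add: algebra_simps)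

lemma sig_1 [simp]: "sig 1 = 1"
proof -
  have "sig 1 * a = a" for a using sig_mult[of 1 "sig a"] by simp
  from this[of 1] show ?thesis by simp
qed

lemma eps_sig_eps: "eps * sig eps = 1"
  using formed unfolding formed_space_def by auto

lemma Lam_zero: "0 \<in> Lam" and Lam_add: "a \<in> Lam \<Longrightarrow> b \<in> Lam \<Longrightarrow> a + b \<in> Lam"
  and Lam_uminus: "a \<in> Lam \<Longrightarrow> - a \<in> Lam" and Lam_trace: "c - eps * sig c \<in> Lam"
  using formed unfolding formed_space_def form_parameter_def by blast+

lemma Lam_diff: "a \<in> Lam \<Longrightarrow> b \<in> Lam \<Longrightarrow> a - b \<in> Lam"
  using Lam_add[of a "- b"] Lam_uminus[of b] by simp

lemma q_left: "q (s a v + v') w = sig a * q v w + q v' w"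
  and q_right: "q v (s a w + w') = q v w * a + q v w'"
  using formed unfolding formed_space_def sesquilinear_def by auto

lemma q_add_left: "q (v + v') w = q v w + q v' w"
  using q_left[of 1 v v' w] by simp

lemma q_add_right: "q v (w + w') = q v w + q v w'"
  using q_right[of v 1 w w'] by simp

lemma q_zero_left [simp]: "q 0 w = 0"
  using q_add_left[of 0 0 w] by (metis add_cancel_right_right add_0)

lemma q_zero_right [simp]: "q v 0 = 0"
  using q_add_right[of v 0 0] by (metis add_cancel_right_right add_0)

lemma q_scale_left: "q (s a v) w = sig a * q v w"
  using q_left[of a v 0 w] by simp

lemma q_scale_right: "q v (s a w) = q v w * a"
  using q_right[of v a w 0] by simp

lemma q_minus_left: "q (- v) w = - q v w"
  using q_add_left[of v "- v" w] by (simp add: eq_neg_iff_add_eq_0 add.commute)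

lemma q_minus_right: "q v (- w) = - q v w"
  using q_add_right[of v w "- w"] by (simp add: eq_neg_iff_add_eq_0 add.commute)

lemma q_diff_left: "q (v - v') w = q v w - q v' w"
  using q_add_left[of v "- v'" w] by (simp add: q_minus_left)

lemma q_diff_right: "q v (w - w') = q v w - q v w'"
  using q_add_right[of v w "- w'"] by (simp add: q_minus_right)

lemma omega_add_left: "\<omega> (v + v') w = \<omega> v w + \<omega> v' w"
  and omega_add_right: "\<omega> v (w + w') = \<omega> v w + \<omega> v w'"
  and omega_scale_left: "\<omega> (s a v) w = sig a * \<omega> v w"
  and omega_scale_right: "\<omega> v (s a w) = \<omega> v w * a"
  and omega_diff_left: "\<omega> (v - v') w = \<omega> v w - \<omega> v' w"
  and omega_diff_right: "\<omega> v (w - w') = \<omega> v w - \<omega> v w'"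
  and omega_minus_right: "\<omega> v (- w) = - \<omega> v w"
  by (simp_all add: omega_def q_add_left q_add_right q_scale_left q_scale_right q_diff_left
      q_diff_right q_minus_left q_minus_right sig_add sig_mult sig_diff sig_minus algebra_simps)

lemma omega_zero_left [simp]: "\<omega> 0 w = 0" and omega_zero_right [simp]: "\<omega> v 0 = 0"
  using omega_diff_left[of 0 0 w] omega_diff_right[of v 0 0] by simp_all

lemma omega_swap: "\<omega> w v = eps * sig (\<omega> v w)"
proof -
  have "eps * sig (\<omega> v w) = eps * sig (q v w) + (eps * sig eps) * q w v"
    by (simp add: omega_def sig_add sig_mult algebra_simps)
  then show ?thesis using eps_sig_eps by (simp add: omega_def)
qed

lemma omega_eq_0_swap: "\<omega> w v = 0 \<longleftrightarrow> \<omega> v w = 0"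
  using omega_swap[of w v] eps_sig_eps by auto

lemma omega_sum_left: "finite A \<Longrightarrow> \<omega> (sum f A) w = (\<Sum>i\<in>A. \<omega> (f i) w)"
  by (induction A rule: finite_induct) (auto simp: omega_add_left)

lemma omega_sum_right: "finite A \<Longrightarrow> \<omega> v (sum f A) = (\<Sum>i\<in>A. \<omega> v (f i))"
  by (induction A rule: finite_induct) (auto simp: omega_add_right)

lemma q_add_diag: "q (a + b) (a + b) - (q a a + q b b + \<omega> a b) \<in> Lam"
proof -
  have "q (a + b) (a + b) - (q a a + q b b + \<omega> a b) = q b a - eps * sig (q b a)"
    by (simp add: omega_def q_add_left q_add_right algebra_simps)
  then show ?thesis using Lam_trace by simp
qed

lemma q_add3_diag:
  "q (x + y + z) (x + y + z) - (q x x + q y y + q z z + \<omega> x y + \<omega> x z + \<omega> y z) \<in> Lam"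
proof -
  have "q (x + y + z) (x + y + z) - (q x x + q y y + q z z + \<omega> x y + \<omega> x z + \<omega> y z)
    = (q (x + y + z) (x + y + z) - (q (x + y) (x + y) + q z z + \<omega> (x + y) z))
      + (q (x + y) (x + y) - (q x x + q y y + \<omega> x y))"
    by (simp add: omega_add_left algebra_simps)
  then show ?thesis using q_add_diag[of "x + y" z] q_add_diag[of x y] Lam_add by metis
qed

lemma RadI: "(\<And>u. \<omega> u v = 0) \<Longrightarrow> q v v \<in> Lam \<Longrightarrow> v \<in> Rad"
  and Rad_omega: "v \<in> Rad \<Longrightarrow> \<omega> u v = 0"
  unfolding radical_def by auto

lemma orth_subspace: "subspace (orth A)"
  unfolding perp_def by (intro subspaceI) (auto simp: omega_add_left omega_scale_left)

lemma isometry_omega: "isometry s sig eps Lam q f \<Longrightarrow> \<omega> (f v) (f w) = \<omega> v w"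
  unfolding isometry_def form_equiv_def omega_def by (simp add: sig_diff algebra_simps)

lemma isometry_q: "isometry s sig eps Lam q f \<Longrightarrow> q (f v) (f v) - q v v \<in> Lam"
  unfolding isometry_def form_equiv_def by blast

lemma isometry_linear: "isometry s sig eps Lam q f \<Longrightarrow> f (s a x + y) = s a (f x) + f y"
  unfolding isometry_def is_linear_on_def by blast

lemma isometry_add: "isometry s sig eps Lam q f \<Longrightarrow> f (x + y) = f x + f y"
  using isometry_linear[of f 1 x y] by simp

lemma isometryI:
  assumes "\<And>a x y. f (s a x + y) = s a (f x) + f y"
    and "\<And>v w. \<omega> (f v) (f w) = \<omega> v w" and "\<And>v. q (f v) (f v) - q v v \<in> Lam"
  shows "isometry s sig eps Lam q f"
  unfolding isometry_def form_equiv_def is_linear_on_def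
proof (intro conjI allI ballI)
  fix v w
  have "q (f w) (f v) + eps * sig (q (f v) (f w)) = q w v + eps * sig (q v w)"
    using assms(2)[of w v] by (simp add: omega_def)
  then show "q (f w) (f v) - q w v = - eps * sig (q (f v) (f w) - q v w)"
    by (simp add: sig_diff algebra_simps)
qed (use assms in auto)

lemma bij_isometry_image_Rad:
  assumes "bij f" "isometry s sig eps Lam q f"
  shows "f ` Rad = Rad"
proof -
  have "f r \<in> Rad \<longleftrightarrow> r \<in> Rad" for r
  proof -
    have "(\<forall>u. \<omega> u (f r) = 0) \<longleftrightarrow> (\<forall>u. \<omega> u r = 0)"
      using isometry_omega[OF assms(2)] by (metis assms(1) bij_pointE)
    moreover have "q (f r) (f r) \<in> Lam \<longleftrightarrow> q r r \<in> Lam"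
    proof
      assume "q (f r) (f r) \<in> Lam"
      from Lam_diff[OF this isometry_q[OF assms(2), of r]] show "q r r \<in> Lam" by simp
    next
      assume "q r r \<in> Lam"
      from Lam_add[OF isometry_q[OF assms(2), of r] this] show "q (f r) (f r) \<in> Lam" by simp
    qed
    ultimately show ?thesis unfolding radical_def by simp
  qed
  then show ?thesis by (rule bij_image_invariant[OF assms(1)])
qed

lemma Rad_subspace:
  assumes "isotropic s sig eps Lam q U" "Rad \<subseteq> U"
  shows "subspace Rad"
proof -
  have "Rad = U \<inter> {v. \<forall>u. \<omega> u v = 0}"
    using assms unfolding isotropic_def radical_def by auto
  moreover have "subspace {v. \<forall>u. \<omega> u v = 0}"
    by (intro subspaceI) (auto simp: omega_add_right omega_scale_right)
  ultimately show ?thesis using assms(1) subspace_inter unfolding isotropic_def by auto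
qed

text \<open>Orthogonalise a vector pairing nontrivially with \<open>b - \<Sum>\<^sub>i \<sigma>(\<omega>(b, wf0 i)) i\<close> against the old partners.\<close>
lemma dual_vector_exists:
  assumes "finite B0" "b \<notin> span B0" "subspace W"
    and wf0: "\<forall>i\<in>B0. wf0 i \<in> W" "\<forall>i\<in>B0. \<forall>i'\<in>B0. \<omega> i (wf0 i') = (if i = i' then 1 else 0)"
    and nondeg: "\<And>x. x \<in> span (insert b B0) \<Longrightarrow> (\<forall>w\<in>W. \<omega> x w = 0) \<Longrightarrow> x = 0"
  shows "\<exists>wb\<in>W. \<omega> b wb = 1 \<and> (\<forall>i\<in>B0. \<omega> i wb = 0)"
proof -
  define xb where "xb = b - (\<Sum>i\<in>B0. s (sig (\<omega> b (wf0 i))) i)"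
  have sum_B0: "(\<Sum>i\<in>B0. s (sig (\<omega> b (wf0 i))) i) \<in> span B0"
    by (intro span_sum span_scale span_base)
  have "xb \<in> span (insert b B0)"
    unfolding xb_def using sum_B0 span_mono[of B0 "insert b B0"]
    by (intro span_diff) (auto intro: span_base)
  moreover have "xb \<noteq> 0"
    using assms(2) sum_B0 unfolding xb_def by auto
  ultimately obtain w where w: "w \<in> W" "\<omega> xb w \<noteq> 0" using nondeg by blast
  define w' where "w' = w - (\<Sum>i\<in>B0. s (\<omega> i w) (wf0 i))"
  have w'_W: "w' \<in> W" unfolding w'_def using wf0(1) w(1)
    by (intro subspace_diff[OF assms(3)] subspace_sum[OF assms(3)] subspace_scale[OF assms(3)]) auto
  have omega_w': "\<omega> i' w' = 0" if "i' \<in> B0" for i'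
  proof -
    have "\<omega> i' w' = \<omega> i' w - (\<Sum>i\<in>B0. \<omega> i' (wf0 i) * \<omega> i w)"
      unfolding w'_def using assms(1) by (simp add: omega_diff_right omega_sum_right omega_scale_right)
    also have "(\<Sum>i\<in>B0. \<omega> i' (wf0 i) * \<omega> i w) = (\<Sum>i\<in>B0. if i' = i then \<omega> i w else 0)"
      using wf0(2) that by (intro sum.cong) auto
    finally show ?thesis using that assms(1) by simp
  qed
  have "\<omega> b w' = \<omega> xb w"
    unfolding xb_def w'_def using assms(1)
    by (simp add: omega_diff_right omega_sum_right omega_scale_right omega_diff_left
        omega_sum_left omega_scale_left)
  then have "\<omega> b w' \<noteq> 0" using w(2) by simp
  then have "\<omega> b (s (inverse (\<omega> b w')) w') = 1" by (simp add: omega_scale_right)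
  moreover have "s (inverse (\<omega> b w')) w' \<in> W" using w'_W subspace_scale[OF assms(3)] by blast
  moreover have "\<forall>i\<in>B0. \<omega> i (s (inverse (\<omega> b w')) w') = 0" using omega_w' by (simp add: omega_scale_right)
  ultimately show ?thesis by blast
qed

lemma dual_family_insert:
  assumes "subspace W" "b \<notin> B0"
    and wf0: "\<forall>i\<in>B0. wf0 i \<in> W" "\<forall>i\<in>B0. \<forall>i'\<in>B0. \<omega> i (wf0 i') = (if i = i' then 1 else 0)"
    and wb: "wb \<in> W" "\<omega> b wb = 1" "\<forall>i\<in>B0. \<omega> i wb = 0"
  shows "\<exists>wf. (\<forall>j\<in>insert b B0. wf j \<in> W) \<and>
    (\<forall>j\<in>insert b B0. \<forall>j'\<in>insert b B0. \<omega> j (wf j') = (if j = j' then 1 else 0))"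
proof -
  define wf where "wf = (\<lambda>j. if j = b then wb else wf0 j - s (\<omega> b (wf0 j)) wb)"
  have "\<forall>j\<in>insert b B0. wf j \<in> W"
    unfolding wf_def using wb(1) wf0(1)
    by (auto intro!: subspace_diff[OF assms(1)] subspace_scale[OF assms(1)])
  moreover have "\<omega> j (wf j') = (if j = j' then 1 else 0)" if "j \<in> insert b B0" "j' \<in> insert b B0" for j j'
  proof (cases "j' = b")
    case True
    then show ?thesis using that wb assms(2) unfolding wf_def by auto
  next
    case False
    then have "\<omega> j (wf j') = \<omega> j (wf0 j') - \<omega> j wb * \<omega> b (wf0 j')"
      unfolding wf_def by (simp add: omega_diff_right omega_scale_right)
    then show ?thesis using that wb wf0(2) assms(2) False by auto
  qed
  ultimately show ?thesis by blast
qed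

lemma dual_family_exists:
  assumes "finite B" "independent B" "subspace W"
    and "\<And>x. x \<in> span B \<Longrightarrow> (\<forall>w\<in>W. \<omega> x w = 0) \<Longrightarrow> x = 0"
  shows "\<exists>wf. (\<forall>b\<in>B. wf b \<in> W) \<and> (\<forall>b\<in>B. \<forall>b'\<in>B. \<omega> b (wf b') = (if b = b' then 1 else 0))"
  using assms(1,2,4)
proof (induction B rule: finite_induct)
  case empty
  then show ?case by auto
next
  case (insert b B0)
  have indep_B0: "independent B0" and b_notin: "b \<notin> span B0"
    using insert.prems(1) insert.hyps(2) by (auto simp: independent_insert)
  have nondeg_B0: "\<And>x. x \<in> span B0 \<Longrightarrow> (\<forall>w\<in>W. \<omega> x w = 0) \<Longrightarrow> x = 0"
    using insert.prems(2) span_mono[of B0 "insert b B0"] by blast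
  obtain wf0 where wf0: "\<forall>i\<in>B0. wf0 i \<in> W"
    "\<forall>i\<in>B0. \<forall>i'\<in>B0. \<omega> i (wf0 i') = (if i = i' then 1 else 0)"
    using insert.IH[OF indep_B0 nondeg_B0] by blast
  obtain wb where "wb \<in> W" "\<omega> b wb = 1" "\<forall>i\<in>B0. \<omega> i wb = 0"
    using dual_vector_exists[OF insert.hyps(1) b_notin assms(3) wf0 insert.prems(2)] by blast
  with dual_family_insert[OF assms(3) insert.hyps(2) wf0] show ?case by blast
qed
end

locale isotropic_pair = formed_vspace +
  fixes W U1
  assumes W_Pomega: "W \<in> Pomega s sig eps Lam q"
    and U1_isotropic: "isotropic s sig eps Lam q U1"
    and U1_inter_orth_W: "U1 \<inter> orth W = {0}"
begin

lemma W_isotropic: "isotropic s sig eps Lam q W" and Rad_subset_W: "Rad \<subseteq> W"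
  using W_Pomega unfolding Pomega_def by auto

lemma W_subspace: "subspace W" and W_omega: "v \<in> W \<Longrightarrow> w \<in> W \<Longrightarrow> \<omega> v w = 0"
  and W_q: "v \<in> W \<Longrightarrow> q v v \<in> Lam"
  using W_isotropic unfolding isotropic_def by auto

lemma U1_subspace: "subspace U1" and U1_omega: "v \<in> U1 \<Longrightarrow> w \<in> U1 \<Longrightarrow> \<omega> v w = 0"
  and U1_q: "v \<in> U1 \<Longrightarrow> q v v \<in> Lam"
  using U1_isotropic unfolding isotropic_def by auto

lemma W_subset_orth_W: "W \<subseteq> orth W"
  unfolding perp_def using W_omega by auto

lemma orth_W_omega: "d \<in> orth W \<Longrightarrow> w \<in> W \<Longrightarrow> \<omega> d w = 0"
  and orth_W_omega': "d \<in> orth W \<Longrightarrow> w \<in> W \<Longrightarrow> \<omega> w d = 0"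
  unfolding perp_def using omega_eq_0_swap by auto

abbreviation quotW where "quotW \<equiv> quot sig eps q W"

lemma mem_quotW_iff: "X \<in> quotW \<longleftrightarrow> (\<exists>x\<in>orth W. X = coset x W)"
  unfolding quot_def by auto

lemma coset_mem_quotW: "x \<in> orth W \<Longrightarrow> coset x W \<in> quotW"
  unfolding mem_quotW_iff by blast

end

section \<open>A hyperbolic partner of an isotropic subspace\<close>

locale partner_construction = isotropic_pair +
  fixes X0 X2 B wf
  assumes X0_subspace: "subspace X0" and U1_subset_X0: "U1 \<subseteq> X0"
    and X0_inter_orth_W: "X0 \<inter> orth W = {0}"
    and X0_orth_W_decomp: "\<And>v. \<exists>x\<in>X0. \<exists>d\<in>orth W. v = x + d"
    and X2_subspace: "subspace X2" and U1_inter_X2: "U1 \<inter> X2 = {0}"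
    and X0_decomp: "\<And>x. x \<in> X0 \<Longrightarrow> \<exists>a\<in>U1. \<exists>c\<in>X2. x = a + c"
    and B: "finite B" "span B = X0"
    and wf_W: "\<And>b. b \<in> B \<Longrightarrow> wf b \<in> W"
    and wf_dual: "\<And>b b'. b \<in> B \<Longrightarrow> b' \<in> B \<Longrightarrow> \<omega> b (wf b') = (if b = b' then 1 else 0)"
begin

lemma sum_wf_W: "(\<Sum>b\<in>B. s (c b) (wf b)) \<in> W"
  using wf_W by (intro subspace_sum[OF W_subspace] subspace_scale[OF W_subspace]) auto

lemma B_subset_X0: "B \<subseteq> X0"
  using B(2) span_superset by blast

lemma omega_B_sum_wf: "b' \<in> B \<Longrightarrow> \<omega> b' (\<Sum>b\<in>B. s (c b) (wf b)) = c b'"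
proof -
  assume b': "b' \<in> B"
  have "\<omega> b' (\<Sum>b\<in>B. s (c b) (wf b)) = (\<Sum>b\<in>B. \<omega> b' (wf b) * c b)"
    using B(1) by (simp add: omega_sum_right omega_scale_right)
  also have "\<dots> = (\<Sum>b\<in>B. if b' = b then c b else 0)"
    using wf_dual[OF b'] by (intro sum.cong) auto
  finally show ?thesis using B(1) b' by simp
qed

lemma omega_sum_wf:
  assumes "semilinear_on s sig X0 \<phi>" "x \<in> X0"
  shows "\<omega> x (\<Sum>b\<in>B. s (\<phi> b) (wf b)) = \<phi> x"
proof -
  obtain c where c: "x = (\<Sum>b\<in>B. s (c b) b)"
    using assms(2) B span_finite[OF B(1)] by auto
  have "\<omega> x (\<Sum>b\<in>B. s (\<phi> b) (wf b)) = (\<Sum>b\<in>B. sig (c b) * \<phi> b)"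
    unfolding c using B(1) omega_B_sum_wf by (simp add: omega_sum_left omega_scale_left)
  also have "\<dots> = \<phi> x"
    unfolding c by (rule semilinear_on_sum[OF assms(1) sig_1 X0_subspace B(1), symmetric])
      (use B_subset_X0 in auto)
  finally show ?thesis .
qed

text \<open>The correction \<open>w - \<Sum>\<^sub>b \<omega>(b, w) wf b\<close> is orthogonal to \<open>X0\<close> and to \<open>W\<^sup>\<bottom>\<close>, hence lies in the
  radical, where \<open>\<psi>\<close> vanishes.\<close>
lemma omega_sum_B:
  assumes \<psi>: "semilinear_on s id W \<psi>" "\<And>r. r \<in> Rad \<Longrightarrow> \<psi> r = 0" and w: "w \<in> W"
  shows "\<omega> (\<Sum>b\<in>B. s (sig (\<psi> (wf b))) b) w = \<psi> w"
proof -
  define r where "r = w - (\<Sum>b\<in>B. s (\<omega> b w) (wf b))"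
  have r_W: "r \<in> W" unfolding r_def by (rule subspace_diff[OF W_subspace w sum_wf_W])
  have "\<omega> u r = 0" for u
  proof -
    obtain x d where xd: "x \<in> X0" "d \<in> orth W" "u = x + d" using X0_orth_W_decomp by blast
    obtain c where c: "x = (\<Sum>b\<in>B. s (c b) b)"
      using xd(1) B span_finite[OF B(1)] by auto
    have "\<omega> b r = 0" if "b \<in> B" for b
      unfolding r_def using that by (simp add: omega_diff_right omega_B_sum_wf)
    then have "\<omega> x r = 0" unfolding c using B(1) by (simp add: omega_sum_left omega_scale_left)
    then show ?thesis using xd orth_W_omega[OF xd(2) r_W] by (simp add: omega_add_left)
  qed
  then have "r \<in> Rad" using W_q[OF r_W] by (rule RadI)
  have "\<psi> w = \<psi> r + \<psi> (\<Sum>b\<in>B. s (\<omega> b w) (wf b))"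
    using semilinear_on_add[OF \<psi>(1) id_apply r_W sum_wf_W[of "\<lambda>b. \<omega> b w"]] unfolding r_def by simp
  also have "\<psi> (\<Sum>b\<in>B. s (\<omega> b w) (wf b)) = (\<Sum>b\<in>B. \<omega> b w * \<psi> (wf b))"
    using semilinear_on_sum[OF \<psi>(1) id_apply W_subspace B(1), where v=wf and c="\<lambda>b. \<omega> b w"] wf_W
    by simp
  also have "\<dots> = \<omega> (\<Sum>b\<in>B. s (sig (\<psi> (wf b))) b) w"
    using B(1) by (simp add: omega_sum_left omega_scale_left mult.commute)
  finally show ?thesis using \<psi>(2)[OF \<open>r \<in> Rad\<close>] by simp
qed

definition pU where "pU = proj_along U1 X2"

lemma pU_eq: "a \<in> U1 \<Longrightarrow> c \<in> X2 \<Longrightarrow> pU (a + c) = a"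
  unfolding pU_def by (rule proj_along_eqI[OF U1_subspace X2_subspace U1_inter_X2]) auto

lemma pU_mem: "x \<in> X0 \<Longrightarrow> pU x \<in> U1" and pU_diff_mem: "x \<in> X0 \<Longrightarrow> x - pU x \<in> X2"
  using X0_decomp pU_eq by (metis add_diff_cancel_left')+

lemma pU_U1: "u \<in> U1 \<Longrightarrow> pU u = u"
  using pU_eq[of u 0] subspace_0[OF X2_subspace] by simp

lemma pU_linear:
  assumes "x \<in> X0" "y \<in> X0"
  shows "pU (s a x + y) = s a (pU x) + pU y"
proof -
  have "s a x + y = (s a (pU x) + pU y) + (s a (x - pU x) + (y - pU y))"
    by (simp add: algebra_simps)
  moreover have "s a (pU x) + pU y \<in> U1"
    using pU_mem assms U1_subspace by (intro subspace_add subspace_scale) auto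
  moreover have "s a (x - pU x) + (y - pU y) \<in> X2"
    using pU_diff_mem assms X2_subspace by (intro subspace_add subspace_scale) auto
  ultimately show ?thesis using pU_eq by metis
qed

lemma pU_diff_linear:
  "x \<in> X0 \<Longrightarrow> y \<in> X0 \<Longrightarrow> s a x + y - pU (s a x + y) = s a (x - pU x) + (y - pU y)"
  using pU_linear by (simp add: algebra_simps)

text \<open>A sesquilinear form on \<open>X0\<close> with \<open>\<beta> + \<epsilon> \<sigma>(\<beta>\<^sup>t) = \<omega>\<close> and \<open>\<beta>(x, x) = Q(x)\<close>; it uses the isotropy of
  \<open>U1\<close> to make \<open>\<beta>(-, u) = 0\<close> for \<open>u \<in> U1\<close>, so that the partner contains \<open>U1\<close>.\<close>
definition \<beta> where "\<beta> y x = \<omega> (pU y) x + q (y - pU y) (x - pU x)"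

lemma beta_semilinear_left: "semilinear_on s sig X0 (\<lambda>y. \<beta> y x)"
  unfolding semilinear_on_def
proof (intro allI ballI)
  fix a y y' assume "y \<in> X0" "y' \<in> X0"
  note lin = pU_linear[OF this, of a] pU_diff_linear[OF this, of a]
  show "\<beta> (s a y + y') x = sig a * \<beta> y x + \<beta> y' x"
    unfolding \<beta>_def lin(2) unfolding lin(1) omega_add_left omega_scale_left q_add_left q_scale_left
    by (simp add: algebra_simps)
qed

lemma beta_linear_right: "semilinear_on s id X0 (\<beta> y)"
  unfolding semilinear_on_def
proof (intro allI ballI)
  fix a x x' assume "x \<in> X0" "x' \<in> X0"
  note lin = pU_diff_linear[OF this, of a]
  show "\<beta> y (s a x + x') = id a * \<beta> y x + \<beta> y x'"
    unfolding \<beta>_def lin omega_add_right omega_scale_right q_add_right q_scale_right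
    by (simp add: algebra_simps)
qed

lemma beta_omega:
  assumes "x \<in> X0" "y \<in> X0"
  shows "\<beta> x y + eps * sig (\<beta> y x) = \<omega> x y"
proof -
  define a a' c c' where "a = pU x" "a' = pU y" "c = x - a" "c' = y - a'"
  have aa': "\<omega> a a' = 0" unfolding a_a'_c_c'_def using pU_mem assms U1_omega by blast
  have x: "x = a + c" and y: "y = a' + c'" unfolding a_a'_c_c'_def by auto
  have "\<beta> x y = \<omega> a y + q c c'" unfolding \<beta>_def a_a'_c_c'_def by simp
  moreover have "eps * sig (\<beta> y x) = \<omega> x a' + eps * sig (q c' c)"
    unfolding \<beta>_def a_a'_c_c'_def by (simp add: sig_add algebra_simps omega_swap[of x])
  moreover have "\<omega> x y = \<omega> a a' + \<omega> a c' + \<omega> c a' + \<omega> c c'"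
    unfolding x y by (simp add: omega_add_left omega_add_right)
  moreover have "\<omega> a y = \<omega> a a' + \<omega> a c'" unfolding y by (simp add: omega_add_right)
  moreover have "\<omega> x a' = \<omega> a a' + \<omega> c a'" unfolding x by (simp add: omega_add_left)
  ultimately show ?thesis using aa' by (simp add: omega_def)
qed

lemma beta_q: "x \<in> X0 \<Longrightarrow> q x x - \<beta> x x \<in> Lam"
proof -
  assume x: "x \<in> X0"
  define a c where "a = pU x" "c = x - a"
  have x_eq: "x = a + c" unfolding a_c_def by simp
  have a: "a \<in> U1" unfolding a_c_def using pU_mem[OF x] .
  have "\<beta> x x = \<omega> a a + \<omega> a c + q c c"
    unfolding \<beta>_def a_c_def[symmetric] using x_eq by (metis omega_add_right)
  then have "\<beta> x x = \<omega> a c + q c c" using U1_omega[OF a a] by simp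
  then have "q x x - \<beta> x x = (q (a + c) (a + c) - (q a a + q c c + \<omega> a c)) + q a a"
    by (subst (1 2) x_eq) (simp add: algebra_simps)
  then show ?thesis using Lam_add[OF q_add_diag[of a c] U1_q[OF a]] by simp
qed

lemma beta_U1: "u \<in> U1 \<Longrightarrow> y \<in> X0 \<Longrightarrow> \<beta> y u = 0"
  unfolding \<beta>_def using pU_U1 pU_mem U1_omega by simp

definition T where "T x = (\<Sum>b\<in>B. s (\<beta> b x) (wf b))"

lemma T_W: "T x \<in> W"
  unfolding T_def by (rule sum_wf_W)

lemma T_linear: "x \<in> X0 \<Longrightarrow> y \<in> X0 \<Longrightarrow> T (s a x + y) = s a (T x) + T y"
  using beta_linear_right unfolding semilinear_on_def T_def
  by (simp add: scale_sum_right scale_left_distrib sum.distrib)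

lemma omega_T: "y \<in> X0 \<Longrightarrow> \<omega> y (T x) = \<beta> y x"
  unfolding T_def by (rule omega_sum_wf[OF beta_semilinear_left])

lemma T_U1: "u \<in> U1 \<Longrightarrow> T u = 0"
  unfolding T_def using beta_U1 B_subset_X0 by (auto intro!: sum.neutral)

text \<open>By the choice of \<open>\<beta>\<close>, the shear \<open>x \<mapsto> x - T x\<close> kills \<open>\<omega>\<close> and \<open>Q\<close> on \<open>X0\<close>.\<close>
definition Y where "Y = (\<lambda>x. x - T x) ` X0"

lemma Y_subspace: "subspace Y"
  unfolding Y_def
proof (intro subspaceI)
  show "0 \<in> (\<lambda>x. x - T x) ` X0"
    using T_U1 subspace_0[OF U1_subspace] subspace_0[OF X0_subspace] by (force intro: image_eqI[of _ _ 0])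
next
  fix y z assume "y \<in> (\<lambda>x. x - T x) ` X0" "z \<in> (\<lambda>x. x - T x) ` X0"
  then obtain x x' where x: "x \<in> X0" "x' \<in> X0" "y = x - T x" "z = x' - T x'" by blast
  have "y + z = (x + x') - T (x + x')" using T_linear[OF x(1,2), of 1] x(3,4) by simp
  then show "y + z \<in> (\<lambda>x. x - T x) ` X0" using subspace_add[OF X0_subspace x(1,2)] by blast
next
  fix c y assume "y \<in> (\<lambda>x. x - T x) ` X0"
  then obtain x where x: "x \<in> X0" "y = x - T x" by blast
  have "s c y = s c x - T (s c x)"
    using T_linear[OF x(1) subspace_0[OF X0_subspace], of c] T_U1[OF subspace_0[OF U1_subspace]] x(2)
    by (simp add: scale_right_diff_distrib)
  then show "s c y \<in> (\<lambda>x. x - T x) ` X0" using subspace_scale[OF X0_subspace x(1)] by blast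
qed

lemma Y_isotropic: "isotropic s sig eps Lam q Y"
  unfolding isotropic_def
proof (intro conjI ballI Y_subspace)
  fix y z assume "y \<in> Y" "z \<in> Y"
  then obtain x x' where x: "x \<in> X0" "x' \<in> X0" "y = x - T x" "z = x' - T x'"
    unfolding Y_def by blast
  have "\<omega> y z = \<omega> x x' - \<beta> x x' - eps * sig (\<beta> x' x)"
    using omega_T x W_omega[OF T_W T_W] omega_swap[of "T x" x']
    by (simp add: omega_diff_left omega_diff_right)
  then show "\<omega> y z = 0" using beta_omega[OF x(1,2)] by (simp add: algebra_simps)
next
  fix y assume "y \<in> Y"
  then obtain x where x: "x \<in> X0" "y = x - T x" unfolding Y_def by blast
  have "q y y = (q (x + - T x) (x + - T x) - (q x x + q (- T x) (- T x) + \<omega> x (- T x)))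
      + ((q x x - \<beta> x x) + q (T x) (T x))"
    using omega_T[OF x(1)] by (simp add: x(2) q_minus_left q_minus_right omega_minus_right)
  then show "q y y \<in> Lam"
    using q_add_diag[of x "- T x"] beta_q[OF x(1)] W_q[OF T_W] Lam_add by metis
qed

lemma U1_subset_Y: "U1 \<subseteq> Y"
  unfolding Y_def using T_U1 U1_subset_X0 by (force intro: image_eqI)

lemma Y_inter_orth_W: "Y \<inter> orth W = {0}"
proof -
  have "y = 0" if "y \<in> Y" "y \<in> orth W" for y
  proof -
    obtain x where x: "x \<in> X0" "y = x - T x" using \<open>y \<in> Y\<close> unfolding Y_def by blast
    have "x = y + T x" using x by simp
    then have "x \<in> orth W"
      using that(2) W_subset_orth_W T_W subspace_add[OF orth_subspace] by (metis subsetD)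
    then have "x = 0" using x(1) X0_inter_orth_W by blast
    then show "y = 0" using x T_U1 subspace_0[OF U1_subspace] by simp
  qed
  then show ?thesis using subspace_0[OF Y_subspace] subspace_0[OF orth_subspace] by blast
qed

lemma orth_W_Y_decomp: "\<exists>d\<in>orth W. \<exists>y\<in>Y. v = d + y"
proof -
  obtain x d where xd: "x \<in> X0" "d \<in> orth W" "v = x + d" using X0_orth_W_decomp by blast
  have "T x + d \<in> orth W" using xd W_subset_orth_W T_W subspace_add[OF orth_subspace] by blast
  moreover have "x - T x \<in> Y" unfolding Y_def using xd by blast
  moreover have "v = (T x + d) + (x - T x)" using xd by simp
  ultimately show ?thesis by blast
qed

lemma Y_represents:
  assumes "semilinear_on s id W \<psi>" "\<And>r. r \<in> Rad \<Longrightarrow> \<psi> r = 0"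
  shows "\<exists>y\<in>Y. \<forall>w\<in>W. \<omega> y w = \<psi> w"
proof -
  define x where "x = (\<Sum>b\<in>B. s (sig (\<psi> (wf b))) b)"
  have "x \<in> X0" unfolding x_def B(2)[symmetric] by (intro span_sum span_scale span_base)
  then have "x - T x \<in> Y" unfolding Y_def by blast
  moreover have "\<omega> (x - T x) w = \<psi> w" if "w \<in> W" for w
    using omega_sum_B[OF assms that] W_omega[OF T_W that] unfolding x_def
    by (simp add: omega_diff_left)
  ultimately show ?thesis by blast
qed

lemma Y_pairing: "\<exists>w\<in>W. \<forall>y\<in>Y. \<omega> y w = \<omega> y v"
proof -
  define \<phi> where "\<phi> x = \<omega> (x - T x) v" for x
  have "semilinear_on s sig X0 \<phi>"
    unfolding semilinear_on_def
  proof (intro allI ballI)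
    fix a x y assume "x \<in> X0" "y \<in> X0"
    then have e: "s a x + y - T (s a x + y) = s a (x - T x) + (y - T y)"
      using T_linear by (simp add: algebra_simps)
    show "\<phi> (s a x + y) = sig a * \<phi> x + \<phi> y"
      unfolding \<phi>_def e omega_add_left omega_scale_left ..
  qed
  define w where "w = (\<Sum>b\<in>B. s (\<phi> b) (wf b))"
  have "\<omega> y w = \<omega> y v" if "y \<in> Y" for y
  proof -
    obtain x where x: "x \<in> X0" "y = x - T x" using \<open>y \<in> Y\<close> unfolding Y_def by blast
    have "\<omega> y w = \<omega> x w"
      using W_omega[OF T_W sum_wf_W] x(2) unfolding w_def by (simp add: omega_diff_left)
    also have "\<dots> = \<phi> x" unfolding w_def using omega_sum_wf[OF \<open>semilinear_on s sig X0 \<phi>\<close> x(1)] .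
    finally show ?thesis using x \<phi>_def by simp
  qed
  then show ?thesis using sum_wf_W[of \<phi>] unfolding w_def by blast
qed

end

section \<open>The decomposition into \<open>W\<close>, \<open>C\<close> and \<open>Y\<close>\<close>

locale witt_decomposition = isotropic_pair +
  fixes C Y
  assumes C_subspace: "subspace C" and C_subset_orth_W: "C \<subseteq> orth W"
    and W_inter_C: "W \<inter> C = {0}"
    and orth_W_decomp: "\<And>v. v \<in> orth W \<Longrightarrow> \<exists>a\<in>W. \<exists>c\<in>C. v = a + c"
    and Y_isotropic: "isotropic s sig eps Lam q Y"
    and Y_inter_orth_W: "Y \<inter> orth W = {0}"
    and orth_W_Y_decomp: "\<And>v. \<exists>d\<in>orth W. \<exists>y\<in>Y. v = d + y"
    and U1_subset_Y: "U1 \<subseteq> Y"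
    and Y_omega_C: "\<And>c y. c \<in> C \<Longrightarrow> y \<in> Y \<Longrightarrow> \<omega> y c = 0"
    and Y_represents: "\<And>\<psi>. semilinear_on s id W \<psi> \<Longrightarrow> (\<And>r. r \<in> Rad \<Longrightarrow> \<psi> r = 0) \<Longrightarrow>
      \<exists>y\<in>Y. \<forall>w\<in>W. \<omega> y w = \<psi> w"

lemma (in isotropic_pair) partner_construction_exists:
  "\<exists>X0 X2 B wf. partner_construction s sig eps Lam q W U1 X0 X2 B wf"
proof -
  obtain X0 where X0: "subspace X0" "U1 \<subseteq> X0" "X0 \<inter> orth W = {0}"
    "\<forall>v. \<exists>x\<in>X0. \<exists>d\<in>orth W. v = x + d"
    by (rule complement_containing[OF U1_subspace orth_subspace U1_inter_orth_W])
  obtain X2 where X2: "subspace X2" "X2 \<subseteq> X0" "X2 \<inter> U1 = {0}"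
    "\<forall>v\<in>X0. \<exists>a\<in>U1. \<exists>c\<in>X2. v = a + c"
    by (rule complement_within[OF U1_subspace X0(1)])
  obtain B where B: "finite B" "B \<subseteq> X0" "independent B" "span B = X0"
    by (rule subspace_finite_basis[OF X0(1)])
  have nondeg: "x = 0" if "x \<in> span B" "\<forall>w\<in>W. \<omega> x w = 0" for x
  proof -
    have "x \<in> orth W" using that(2) unfolding perp_def by auto
    then show ?thesis using that(1) B(4) X0(3) by blast
  qed
  obtain wf where wf: "\<forall>b\<in>B. wf b \<in> W" "\<forall>b\<in>B. \<forall>b'\<in>B. \<omega> b (wf b') = (if b = b' then 1 else 0)"
    using dual_family_exists[OF B(1) B(3) W_subspace nondeg] by blast
  have "partner_construction s sig eps Lam q W U1 X0 X2 B wf"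
    by (intro partner_construction.intro isotropic_pair_axioms partner_construction_axioms.intro)
      (use X0 X2 B wf in auto)
  then show ?thesis by blast
qed

lemma (in isotropic_pair) witt_decomposition_exists: "\<exists>C Y. witt_decomposition s sig eps Lam q W U1 C Y"
proof -
  obtain X0 X2 B wf where "partner_construction s sig eps Lam q W U1 X0 X2 B wf"
    using partner_construction_exists by blast
  then interpret p: partner_construction s sig eps Lam q W U1 X0 X2 B wf .
  define D where "D = orth W \<inter> {z. \<forall>y\<in>p.Y. \<omega> y z = 0}"
  have "subspace {z. \<forall>y\<in>p.Y. \<omega> y z = 0}"
    by (intro subspaceI) (auto simp: omega_add_right omega_scale_right)
  then have "subspace D" unfolding D_def using orth_subspace by (rule subspace_inter[rotated])
  obtain C where C: "subspace C" "C \<subseteq> D" "C \<inter> W = {0}" "\<forall>v\<in>D. \<exists>a\<in>W. \<exists>c\<in>C. v = a + c"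
    by (rule complement_within[OF W_subspace \<open>subspace D\<close>])
  text \<open>Subtracting from \<open>v \<in> W\<^sup>\<bottom>\<close> a vector of \<open>W\<close> with the same pairing against the partner moves
    it into \<open>D\<close>.\<close>
  have "\<exists>a\<in>W. \<exists>c\<in>C. v = a + c" if v: "v \<in> orth W" for v
  proof -
    obtain w where w: "w \<in> W" "\<forall>y\<in>p.Y. \<omega> y w = \<omega> y v" using p.Y_pairing by blast
    have "v - w \<in> D"
      unfolding D_def using v w W_subset_orth_W subspace_diff[OF orth_subspace]
      by (auto simp: omega_diff_right)
    then obtain a c where ac: "a \<in> W" "c \<in> C" "v - w = a + c" using C(4) by blast
    then have "v = (w + a) + c" by (simp add: algebra_simps)
    moreover have "w + a \<in> W" using w ac subspace_add[OF W_subspace] by blast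
    ultimately show ?thesis using ac by blast
  qed
  moreover have "C \<subseteq> orth W" "\<And>c y. c \<in> C \<Longrightarrow> y \<in> p.Y \<Longrightarrow> \<omega> y c = 0"
    using C(2) unfolding D_def by auto
  ultimately have "witt_decomposition s sig eps Lam q W U1 C p.Y"
    using C(1,3) p.Y_isotropic p.Y_inter_orth_W p.orth_W_Y_decomp p.U1_subset_Y p.Y_represents
    by (intro witt_decomposition.intro isotropic_pair_axioms witt_decomposition_axioms.intro) auto
  then show ?thesis by blast
qed

context witt_decomposition
begin

lemma Y_subspace: "subspace Y" and Y_omega: "y \<in> Y \<Longrightarrow> z \<in> Y \<Longrightarrow> \<omega> y z = 0"
  and Y_q: "y \<in> Y \<Longrightarrow> q y y \<in> Lam"
  using Y_isotropic unfolding isotropic_def by auto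

definition pY where "pY = proj_along Y (orth W)"
definition pW where "pW v = proj_along W C (v - pY v)"
definition pC where "pC v = v - pY v - pW v"

lemma pY_mem: "pY v \<in> Y" and pY_diff_mem: "v - pY v \<in> orth W"
proof -
  obtain d y where dy: "d \<in> orth W" "y \<in> Y" "v = d + y" using orth_W_Y_decomp by blast
  then have "pY v = y"
    unfolding pY_def by (intro proj_along_eqI[OF Y_subspace orth_subspace Y_inter_orth_W]) auto
  then show "pY v \<in> Y" "v - pY v \<in> orth W" using dy by auto
qed

lemma pW_mem: "pW v \<in> W" and pC_mem: "pC v \<in> C"
proof -
  obtain a c where ac: "a \<in> W" "c \<in> C" "v - pY v = a + c" using orth_W_decomp[OF pY_diff_mem] by blast
  then have "pW v = a"
    unfolding pW_def by (intro proj_along_eqI[OF W_subspace C_subspace W_inter_C]) auto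
  then show "pW v \<in> W" "pC v \<in> C" using ac unfolding pC_def by auto
qed

lemma pC_orth_W: "pC v \<in> orth W"
  using pC_mem C_subset_orth_W by blast

lemma decomp: "v = pW v + pC v + pY v"
  unfolding pC_def by simp

lemma decomp_unique:
  assumes "a \<in> W" "c \<in> C" "y \<in> Y" "v = a + c + y"
  shows "pW v = a" "pC v = c" "pY v = y"
proof -
  have "a + c \<in> orth W"
    using assms(1,2) W_subset_orth_W C_subset_orth_W by (intro subspace_add[OF orth_subspace]) auto
  moreover have "v - y = a + c" using assms(4) by simp
  ultimately show pY: "pY v = y"
    unfolding pY_def using assms(3) by (intro proj_along_eqI[OF Y_subspace orth_subspace Y_inter_orth_W]) simp_all
  have "v - pY v - a = c" unfolding pY using assms(4) by simp
  then show pW: "pW v = a"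
    unfolding pW_def using assms(1,2) by (intro proj_along_eqI[OF W_subspace C_subspace W_inter_C]) simp_all
  show "pC v = c" unfolding pC_def pY pW using assms(4) by simp
qed

lemma proj_linear:
  "pW (s a v + v') = s a (pW v) + pW v'" "pC (s a v + v') = s a (pC v) + pC v'"
  "pY (s a v + v') = s a (pY v) + pY v'"
proof -
  have "s a v + v' = s a (pW v + pC v + pY v) + (pW v' + pC v' + pY v')"
    by (simp only: decomp[symmetric])
  also have "\<dots> = (s a (pW v) + pW v') + (s a (pC v) + pC v') + (s a (pY v) + pY v')"
    by (simp add: algebra_simps)
  finally have sum: "s a v + v' = (s a (pW v) + pW v') + (s a (pC v) + pC v') + (s a (pY v) + pY v')" .
  have "s a (pW v) + pW v' \<in> W"
    by (intro subspace_add[OF W_subspace] subspace_scale[OF W_subspace] pW_mem)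
  moreover have "s a (pC v) + pC v' \<in> C"
    by (intro subspace_add[OF C_subspace] subspace_scale[OF C_subspace] pC_mem)
  moreover have "s a (pY v) + pY v' \<in> Y"
    by (intro subspace_add[OF Y_subspace] subspace_scale[OF Y_subspace] pY_mem)
  ultimately show "pW (s a v + v') = s a (pW v) + pW v'" "pC (s a v + v') = s a (pC v) + pC v'"
    "pY (s a v + v') = s a (pY v) + pY v'" using decomp_unique[OF _ _ _ sum] by blast+
qed

lemma proj_W: "a \<in> W \<Longrightarrow> pW a = a \<and> pC a = 0 \<and> pY a = 0"
  using decomp_unique[of a 0 0 a] subspace_0[OF C_subspace] subspace_0[OF Y_subspace] by auto

lemma proj_C: "c \<in> C \<Longrightarrow> pW c = 0 \<and> pC c = c \<and> pY c = 0"
  using decomp_unique[of 0 c 0 c] subspace_0[OF W_subspace] subspace_0[OF Y_subspace] by auto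

lemma proj_Y: "y \<in> Y \<Longrightarrow> pW y = 0 \<and> pC y = 0 \<and> pY y = y"
  using decomp_unique[of 0 0 y y] subspace_0[OF W_subspace] subspace_0[OF C_subspace] by auto

lemma pY_orth_W: "d \<in> orth W \<Longrightarrow> pY d = 0"
proof -
  assume "d \<in> orth W"
  then obtain a c where "a \<in> W" "c \<in> C" "d = a + c" using orth_W_decomp by blast
  then show ?thesis using decomp_unique(3)[of a c 0 d] subspace_0[OF Y_subspace] by auto
qed

lemma coset_pC: "x \<in> orth W \<Longrightarrow> coset (pC x) W = coset x W"
proof -
  assume "x \<in> orth W"
  then have "pC x - x = - pW x" using decomp[of x] pY_orth_W by (simp add: algebra_simps)
  then show ?thesis unfolding coset_eq_iff[OF W_subspace] using subspace_neg[OF W_subspace pW_mem] by simp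
qed

end

section \<open>Lifting to an isometry of the whole space\<close>

context witt_decomposition
begin

lemma Y_eqI:
  assumes "y1 \<in> Y" "y2 \<in> Y" "\<And>w. w \<in> W \<Longrightarrow> \<omega> y1 w = \<omega> y2 w"
  shows "y1 = y2"
proof -
  have "y1 - y2 \<in> orth W" unfolding perp_def using assms(3) by (simp add: omega_diff_left)
  moreover have "y1 - y2 \<in> Y" using subspace_diff[OF Y_subspace assms(1,2)] .
  ultimately show ?thesis using Y_inter_orth_W by (metis IntI singletonD eq_iff_diff_eq_0)
qed

lemma Y_represents_comp:
  assumes "is_linear_on s W k" "\<And>r. r \<in> Rad \<Longrightarrow> k r \<in> Rad"
  shows "\<exists>y'\<in>Y. \<forall>w\<in>W. \<omega> y' w = \<omega> y (k w)"
proof (rule Y_represents)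
  show "semilinear_on s id W (\<lambda>w. \<omega> y (k w))"
    using assms(1) unfolding semilinear_on_def is_linear_on_def
    by (simp add: omega_add_right omega_scale_right mult.commute)
qed (use assms(2) Rad_omega in blast)

definition liftC where "liftC h c = pC (SOME y. y \<in> h (coset c W))"

lemma liftC_eqI:
  assumes "c' \<in> C" "coset c' W = h (coset c W)"
  shows "liftC h c = c'"
proof -
  define y where "y = (SOME y. y \<in> h (coset c W))"
  have "\<exists>y. y \<in> h (coset c W)" using assms(2) coset_self[OF W_subspace] by blast
  then have "y \<in> coset c' W" using someI_ex assms(2) unfolding y_def by metis
  then have "y - c' \<in> W" by (simp add: mem_coset_iff)
  moreover have "y = (y - c') + c' + 0" by simp
  ultimately have "pC y = c'" using decomp_unique(2) assms(1) subspace_0[OF Y_subspace] by blast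
  then show ?thesis unfolding liftC_def y_def .
qed

definition dualY where "dualY g y = (THE y'. y' \<in> Y \<and> (\<forall>w\<in>W. \<omega> y' (g w) = \<omega> y w))"

definition lift where "lift g h v = g (pW v) + liftC h (pC v) + dualY g (pY v)"

context
  fixes h assumes h: "h \<in> carrier (G_quot s sig eps Lam q W)"
begin

lemma G_quot_bij: "bij_betw h quotW quotW" and G_quot_extensional: "h \<in> extensional quotW"
  and G_quot_linear: "quot_linear s sig eps q W h" and G_quot_isometry: "quot_isometry sig eps Lam q W h"
  using h unfolding carrier_G_quot Bij_def by auto

lemma liftC_coset: "c \<in> orth W \<Longrightarrow> liftC h c \<in> C \<and> coset (liftC h c) W = h (coset c W)"
proof -
  assume "c \<in> orth W"
  then have "h (coset c W) \<in> quotW" using coset_mem_quotW G_quot_bij bij_betwE by blast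
  then obtain y where y: "y \<in> orth W" "h (coset c W) = coset y W" unfolding mem_quotW_iff by blast
  then have "coset (pC y) W = h (coset c W)" using coset_pC by simp
  then show ?thesis using liftC_eqI pC_mem by metis
qed

lemma liftC_mem_coset: "c \<in> orth W \<Longrightarrow> liftC h c \<in> h (coset c W)"
  using liftC_coset coset_self[OF W_subspace] by metis

lemma liftC_linear:
  assumes "c \<in> orth W" "c' \<in> orth W"
  shows "liftC h (s a c + c') = s a (liftC h c) + liftC h c'"
proof (rule liftC_eqI)
  show "s a (liftC h c) + liftC h c' \<in> C"
    using liftC_coset assms by (intro subspace_add[OF C_subspace] subspace_scale[OF C_subspace]) auto
  show "coset (s a (liftC h c) + liftC h c') W = h (coset (s a c + c') W)"
    using G_quot_linear liftC_mem_coset[OF assms(1)] liftC_mem_coset[OF assms(2)] assms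
    unfolding quot_linear_def by metis
qed

lemma liftC_zero: "liftC h 0 = 0"
  using liftC_linear[of 0 0 1] subspace_0[OF orth_subspace] by simp

lemma liftC_omega: "c \<in> orth W \<Longrightarrow> c' \<in> orth W \<Longrightarrow> \<omega> (liftC h c) (liftC h c') = \<omega> c c'"
  and liftC_q: "c \<in> orth W \<Longrightarrow> q (liftC h c) (liftC h c) - q c c \<in> Lam"
  using G_quot_isometry liftC_mem_coset unfolding quot_isometry_def by blast+

lemma liftC_inj:
  assumes "c \<in> C" "c' \<in> C" "liftC h c = liftC h c'"
  shows "c = c'"
proof -
  have c: "c \<in> orth W" "c' \<in> orth W" using assms C_subset_orth_W by auto
  then have "h (coset c W) = h (coset c' W)" using liftC_coset assms(3) by metis
  then have "coset c W = coset c' W"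
    using G_quot_bij coset_mem_quotW[OF c(1)] coset_mem_quotW[OF c(2)] by (metis bij_betw_def inj_onD)
  then have "c - c' \<in> W" using coset_eq_iff[OF W_subspace] by simp
  moreover have "c - c' \<in> C" using subspace_diff[OF C_subspace assms(1,2)] .
  ultimately show ?thesis using W_inter_C by (metis IntI singletonD eq_iff_diff_eq_0)
qed

lemma liftC_surj:
  assumes "c' \<in> C"
  shows "\<exists>c\<in>C. liftC h c = c'"
proof -
  have "coset c' W \<in> quotW" using assms C_subset_orth_W coset_mem_quotW by blast
  then obtain X where X: "X \<in> quotW" "h X = coset c' W" using G_quot_bij by (metis bij_betw_imp_surj_on imageE)
  then obtain x where x: "x \<in> orth W" "X = coset x W" unfolding mem_quotW_iff by blast
  then have "liftC h (pC x) = c'" using liftC_eqI[OF assms] X coset_pC by simp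
  then show ?thesis using pC_mem by blast
qed

end

context
  fixes g assumes g: "g \<in> carrier (GL_pres s W Rad)"
begin

lemma GL_bij: "bij_betw g W W" and GL_extensional: "g \<in> extensional W"
  and GL_linear: "is_linear_on s W g" and GL_Rad: "g ` Rad = Rad"
  using g unfolding carrier_GL_pres Bij_def by auto

lemma GL_mem: "w \<in> W \<Longrightarrow> g w \<in> W"
  using GL_bij bij_betwE by blast

lemma GL_inv_into: "w \<in> W \<Longrightarrow> inv_into W g w \<in> W \<and> g (inv_into W g w) = w"
  using GL_bij by (metis bij_betw_imp_surj_on bij_betw_inv_into_right inv_into_into)

lemma GL_zero: "g 0 = 0"
  using is_linear_on_0[OF GL_linear W_subspace] .

lemma dualY_eqI:
  assumes y': "y' \<in> Y" "\<forall>w\<in>W. \<omega> y' (g w) = \<omega> y w"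
  shows "dualY g y = y'"
  unfolding dualY_def
proof (rule the_equality)
  show "y' \<in> Y \<and> (\<forall>w\<in>W. \<omega> y' (g w) = \<omega> y w)" using y' by blast
next
  fix y'' assume y'': "y'' \<in> Y \<and> (\<forall>w\<in>W. \<omega> y'' (g w) = \<omega> y w)"
  have "\<omega> y'' w = \<omega> y' w" if w: "w \<in> W" for w
  proof -
    obtain u where u: "u \<in> W" "g u = w" using GL_inv_into[OF w] by blast
    have "\<omega> y'' (g u) = \<omega> y' (g u)" using y'' y'(2) u(1) by simp
    then show ?thesis using u(2) by simp
  qed
  from Y_eqI[OF conjunct1[OF y''] y'(1) this] show "y'' = y'" .
qed

lemma dualY_mem: "dualY g y \<in> Y" and dualY_omega: "w \<in> W \<Longrightarrow> \<omega> (dualY g y) (g w) = \<omega> y w"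
proof -
  let ?k = "inv_into W g"
  have "\<exists>y'\<in>Y. \<forall>w\<in>W. \<omega> y' w = \<omega> y (?k w)"
  proof (rule Y_represents_comp)
    show "is_linear_on s W ?k" by (rule is_linear_on_inv_into[OF GL_linear GL_bij W_subspace])
    show "?k r \<in> Rad" if r: "r \<in> Rad" for r
    proof -
      obtain r' where "r' \<in> Rad" "r = g r'" using r GL_Rad by blast
      then show ?thesis using Rad_subset_W inv_into_f_f[OF bij_betw_imp_inj_on[OF GL_bij]] by auto
    qed
  qed
  then obtain y' where y': "y' \<in> Y" "\<forall>w\<in>W. \<omega> y' w = \<omega> y (?k w)" by blast
  have "\<forall>w\<in>W. \<omega> y' (g w) = \<omega> y w"
    using y'(2) GL_mem inv_into_f_f[OF bij_betw_imp_inj_on[OF GL_bij]] by simp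
  then have "dualY g y = y'" by (rule dualY_eqI[OF y'(1)])
  then show "dualY g y \<in> Y" "w \<in> W \<Longrightarrow> \<omega> (dualY g y) (g w) = \<omega> y w"
    using y' \<open>\<forall>w\<in>W. \<omega> y' (g w) = \<omega> y w\<close> by auto
qed

lemma dualY_linear: "dualY g (s a y + y') = s a (dualY g y) + dualY g y'"
proof (rule dualY_eqI)
  show "s a (dualY g y) + dualY g y' \<in> Y"
    by (intro subspace_add[OF Y_subspace] subspace_scale[OF Y_subspace] dualY_mem)
qed (simp add: dualY_omega omega_add_left omega_scale_left)

lemma dualY_zero: "dualY g 0 = 0"
  using dualY_linear[of 1 0 0] by simp

lemma dualY_inj:
  assumes "y1 \<in> Y" "y2 \<in> Y" "dualY g y1 = dualY g y2"
  shows "y1 = y2"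
proof (rule Y_eqI[OF assms(1,2)])
  fix w assume "w \<in> W"
  then show "\<omega> y1 w = \<omega> y2 w" using dualY_omega[of w y1] dualY_omega[of w y2] assms(3) by simp
qed

lemma dualY_surj:
  assumes "y' \<in> Y"
  shows "\<exists>y\<in>Y. dualY g y = y'"
proof -
  have "\<exists>y\<in>Y. \<forall>w\<in>W. \<omega> y w = \<omega> y' (g w)"
    using Y_represents_comp[OF GL_linear] GL_Rad by blast
  then obtain y where "y \<in> Y" "\<forall>w\<in>W. \<omega> y' (g w) = \<omega> y w" by auto
  then show ?thesis using dualY_eqI[OF assms] by blast
qed

end

context
  fixes g h
  assumes g: "g \<in> carrier (GL_pres s W Rad)" and h: "h \<in> carrier (G_quot s sig eps Lam q W)"
begin

lemma lift_components:
  "pW (lift g h v) = g (pW v)" "pC (lift g h v) = liftC h (pC v)" "pY (lift g h v) = dualY g (pY v)"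
  using decomp_unique[OF GL_mem[OF g pW_mem] conjunct1[OF liftC_coset[OF h pC_orth_W]] dualY_mem[OF g]]
  unfolding lift_def by auto

lemma lift_linear: "lift g h (s a v + v') = s a (lift g h v) + lift g h v'"
proof -
  have "g (pW (s a v + v')) = s a (g (pW v)) + g (pW v')"
    unfolding proj_linear using GL_linear[OF g] pW_mem unfolding is_linear_on_def by blast
  moreover have "liftC h (pC (s a v + v')) = s a (liftC h (pC v)) + liftC h (pC v')"
    unfolding proj_linear using liftC_linear[OF h pC_orth_W pC_orth_W] .
  moreover have "dualY g (pY (s a v + v')) = s a (dualY g (pY v)) + dualY g (pY v')"
    unfolding proj_linear using dualY_linear[OF g] .
  ultimately show ?thesis unfolding lift_def by (simp add: algebra_simps)
qed

lemma lift_add: "lift g h (v + v') = lift g h v + lift g h v'"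
  using lift_linear[of 1 v v'] by simp

lemma lift_W: "a \<in> W \<Longrightarrow> lift g h a = g a"
  unfolding lift_def using proj_W liftC_zero[OF h] dualY_zero[OF g] by simp

lemma lift_C: "c \<in> C \<Longrightarrow> lift g h c = liftC h c"
  unfolding lift_def using proj_C dualY_zero[OF g] GL_zero[OF g] by simp

lemma lift_Y: "y \<in> Y \<Longrightarrow> lift g h y = dualY g y"
  unfolding lift_def using proj_Y liftC_zero[OF h] GL_zero[OF g] by simp

lemma lift_bij: "bij (lift g h)"
proof (rule bijI)
  show "inj (lift g h)"
  proof (rule injI)
    fix v v' assume eq: "lift g h v = lift g h v'"
    have "g (pW v) = g (pW v')" using lift_components(1) eq by metis
    then have "pW v = pW v'" using GL_bij[OF g] pW_mem by (metis bij_betw_inv_into_left)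
    moreover have "pC v = pC v'"
      using liftC_inj[OF h pC_mem pC_mem] lift_components(2) eq by metis
    moreover have "pY v = pY v'"
      using dualY_inj[OF g pY_mem pY_mem] lift_components(3) eq by metis
    ultimately show "v = v'" using decomp[of v] decomp[of v'] by metis
  qed
  have "u \<in> range (lift g h)" for u
  proof -
    obtain a where a: "a \<in> W" "g a = pW u"
      using GL_bij[OF g] pW_mem by (metis bij_betw_iff_bijections)
    obtain c where c: "c \<in> C" "liftC h c = pC u" using liftC_surj[OF h pC_mem] by blast
    obtain y where y: "y \<in> Y" "dualY g y = pY u" using dualY_surj[OF g pY_mem] by blast
    have "lift g h (a + c + y) = lift g h a + lift g h c + lift g h y" by (simp add: lift_add)
    also have "\<dots> = u" using lift_W[OF a(1)] lift_C[OF c(1)] lift_Y[OF y(1)] a c y decomp[of u] by simp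
    finally show ?thesis by (metis rangeI)
  qed
  then show "surj (lift g h)" by blast
qed

lemma lift_mem_Bij: "lift g h \<in> Bij UNIV"
  using lift_bij unfolding Bij_def by auto

text \<open>Here \<open>U = Rad \<oplus> U1\<close>: \<open>g\<close> fixes the radical, and \<open>dualY g\<close> fixes \<open>U1\<close> because \<open>g - id\<close> maps \<open>W\<close>
  into \<open>U\<^sup>\<bottom>\<close>.\<close>
lemma lift_fixes:
  assumes g_orth: "\<forall>w\<in>W. g w - w \<in> orth U" and g_fixes_Rad: "\<forall>r\<in>Rad. g r = r"
    and U1_U: "U1 \<subseteq> U" and u: "u \<in> U" "\<forall>u\<in>U. \<exists>r\<in>Rad. \<exists>u1\<in>U1. u = r + u1"
  shows "lift g h u = u"
proof -
  obtain r u1 where ru: "r \<in> Rad" "u1 \<in> U1" "u = r + u1" using u by blast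
  have "dualY g u1 = u1"
  proof (rule dualY_eqI[OF g])
    show "u1 \<in> Y" using U1_subset_Y ru(2) by blast
    show "\<forall>w\<in>W. \<omega> u1 (g w) = \<omega> u1 w"
    proof
      fix w assume "w \<in> W"
      then have "\<omega> (g w - w) u1 = 0" using g_orth ru(2) U1_U unfolding perp_def by blast
      then show "\<omega> u1 (g w) = \<omega> u1 w" using omega_eq_0_swap by (simp add: omega_diff_right)
    qed
  qed
  moreover have "lift g h r = r" using lift_W ru(1) Rad_subset_W g_fixes_Rad by auto
  ultimately show ?thesis using lift_add lift_Y U1_subset_Y ru by auto
qed

text \<open>The pairings between the three summands are preserved: \<open>W\<close> against \<open>W\<^sup>\<bottom>\<close> and \<open>Y\<close> against \<open>C\<close>
  vanish on both sides, \<open>Y\<close> against \<open>W\<close> by construction of \<open>dualY\<close>.\<close>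
lemma lift_omega: "\<omega> (lift g h v) (lift g h v') = \<omega> v v'"
proof -
  define a c y a' c' y' where "a = pW v" "c = pC v" "y = pY v" "a' = pW v'" "c' = pC v'" "y' = pY v'"
  note defs = a_c_y_a'_c'_y'_def
  have mem: "a \<in> W" "c \<in> C" "y \<in> Y" "a' \<in> W" "c' \<in> C" "y' \<in> Y"
    unfolding defs using pW_mem pC_mem pY_mem by auto
  have orth: "c \<in> orth W" "c' \<in> orth W" using mem C_subset_orth_W by auto
  have ga: "g a \<in> W" "g a' \<in> W" using GL_mem[OF g] mem by auto
  have lc: "liftC h c \<in> C" "liftC h c' \<in> C" "liftC h c \<in> orth W" "liftC h c' \<in> orth W"
    using liftC_coset[OF h] orth C_subset_orth_W by auto
  have dy: "dualY g y \<in> Y" "dualY g y' \<in> Y" using dualY_mem[OF g] by auto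
  have expand: "\<omega> (x1 + x2 + x3) (z1 + z2 + z3) = \<omega> x1 z1 + \<omega> x1 z2 + \<omega> x1 z3 + \<omega> x2 z1 + \<omega> x2 z2
      + \<omega> x2 z3 + \<omega> x3 z1 + \<omega> x3 z2 + \<omega> x3 z3" for x1 x2 x3 z1 z2 z3
    by (simp add: omega_add_left omega_add_right algebra_simps)
  have "\<omega> (g a) (g a') = \<omega> a a'" "\<omega> (g a) (liftC h c') = \<omega> a c'" "\<omega> (liftC h c) (g a') = \<omega> c a'"
    using W_omega orth_W_omega orth_W_omega' mem orth ga lc by simp_all
  moreover have "\<omega> (g a) (dualY g y') = \<omega> a y'" "\<omega> (dualY g y) (g a') = \<omega> y a'"
    using dualY_omega[OF g] mem omega_swap[of "g a"] omega_swap[of a] by simp_all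
  moreover have "\<omega> (liftC h c) (dualY g y') = \<omega> c y'" "\<omega> (dualY g y) (liftC h c') = \<omega> y c'"
    using Y_omega_C mem lc dy omega_eq_0_swap by metis+
  moreover have "\<omega> (liftC h c) (liftC h c') = \<omega> c c'" using liftC_omega[OF h orth] .
  moreover have "\<omega> (dualY g y) (dualY g y') = \<omega> y y'" using Y_omega mem dy by simp
  ultimately have "\<omega> (g a + liftC h c + dualY g y) (g a' + liftC h c' + dualY g y') =
      \<omega> (a + c + y) (a' + c' + y')"
    unfolding expand by simp
  then show ?thesis unfolding lift_def defs by (simp only: decomp[symmetric])
qed

lemma lift_q: "q (lift g h v) (lift g h v) - q v v \<in> Lam"
proof -
  define a c y where "a = pW v" "c = pC v" "y = pY v"
  have mem: "a \<in> W" "c \<in> C" "y \<in> Y" unfolding a_c_y_def using pW_mem pC_mem pY_mem by auto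
  have orth: "c \<in> orth W" using mem C_subset_orth_W by auto
  let ?a = "g a" and ?c = "liftC h c" and ?y = "dualY g y"
  have cross: "\<omega> ?a ?c + \<omega> ?a ?y + \<omega> ?c ?y = \<omega> a c + \<omega> a y + \<omega> c y"
  proof -
    have "\<omega> ?a ?c = \<omega> a c"
      using orth_W_omega' GL_mem[OF g] liftC_coset[OF h orth] C_subset_orth_W mem orth by auto
    moreover have "\<omega> ?a ?y = \<omega> a y"
      using dualY_omega[OF g] mem omega_swap[of "g a"] omega_swap[of a] by simp
    moreover have "\<omega> ?c ?y = \<omega> c y"
      using Y_omega_C mem liftC_coset[OF h orth] dualY_mem[OF g] omega_eq_0_swap by metis
    ultimately show ?thesis by simp
  qed
  have "q ?a ?a - q a a \<in> Lam" using W_q GL_mem[OF g] mem Lam_diff by blast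
  moreover have "q ?c ?c - q c c \<in> Lam" using liftC_q[OF h orth] .
  moreover have "q ?y ?y - q y y \<in> Lam" using Y_q dualY_mem[OF g] mem Lam_diff by blast
  ultimately have diag: "(q ?a ?a + q ?c ?c + q ?y ?y) - (q a a + q c c + q y y) \<in> Lam"
    using Lam_add by (metis add_diff_add)
  have "a + c + y = v" unfolding a_c_y_def by (simp only: decomp[symmetric])
  moreover have "lift g h v = ?a + ?c + ?y" unfolding lift_def a_c_y_def ..
  ultimately have "q (lift g h v) (lift g h v) - q v v =
      (q (?a + ?c + ?y) (?a + ?c + ?y) - (q ?a ?a + q ?c ?c + q ?y ?y + \<omega> ?a ?c + \<omega> ?a ?y + \<omega> ?c ?y))
    - (q (a + c + y) (a + c + y) - (q a a + q c c + q y y + \<omega> a c + \<omega> a y + \<omega> c y))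
    + ((q ?a ?a + q ?c ?c + q ?y ?y) - (q a a + q c c + q y y))"
    using cross by (simp add: algebra_simps)
  then show ?thesis
    by (simp only:) (rule Lam_add[OF Lam_diff[OF q_add3_diag q_add3_diag] diag])
qed

lemma lift_isometry: "isometry s sig eps Lam q (lift g h)"
  using lift_linear lift_omega lift_q by (rule isometryI)

lemma lift_image_W: "lift g h ` W = W"
proof -
  have "lift g h ` W = g ` W" using lift_W by (auto intro: image_eqI)
  then show ?thesis using GL_bij[OF g] by (simp add: bij_betw_def)
qed

lemma restrict_lift_W: "restrict (lift g h) W = g"
proof
  fix x
  show "restrict (lift g h) W x = g x"
    using lift_W GL_extensional[OF g] by (cases "x \<in> W") (simp_all add: extensional_def)
qed

lemma induced_quot_lift: "restrict (\<lambda>X. lift g h ` X) quotW = h"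
proof
  fix X
  show "restrict (\<lambda>X. lift g h ` X) quotW X = h X"
  proof (cases "X \<in> quotW")
    case True
    then obtain x where x: "x \<in> orth W" "X = coset x W" unfolding mem_quotW_iff by blast
    have "lift g h ` X = coset (lift g h x) W"
      unfolding x(2) by (rule image_coset[OF lift_add lift_image_W])
    also have "lift g h x = g (pW x) + liftC h (pC x)"
      unfolding lift_def using pY_orth_W[OF x(1)] dualY_zero[OF g] by simp
    also have "coset (g (pW x) + liftC h (pC x)) W = coset (liftC h (pC x)) W"
      unfolding coset_eq_iff[OF W_subspace] using GL_mem[OF g pW_mem] by simp
    also have "\<dots> = h (coset (pC x) W)" using liftC_coset[OF h pC_orth_W] by blast
    also have "coset (pC x) W = X" using coset_pC[OF x(1)] x(2) by simp
    finally show ?thesis using True by simp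
  next
    case False
    then show ?thesis using G_quot_extensional[OF h] by (simp add: extensional_def)
  qed
qed

end

lemma compose_mem_GL_pres:
  assumes "g1 \<in> carrier (GL_pres s W Rad)" "g2 \<in> carrier (GL_pres s W Rad)"
  shows "compose W g1 g2 \<in> carrier (GL_pres s W Rad)"
proof -
  have "compose W g1 g2 \<in> Bij W" using assms compose_Bij unfolding carrier_GL_pres by blast
  moreover have "is_linear_on s W (compose W g1 g2)"
    unfolding is_linear_on_def
  proof (intro allI ballI)
    fix a x y assume xy: "x \<in> W" "y \<in> W"
    then have "s a x + y \<in> W" by (intro subspace_add[OF W_subspace] subspace_scale[OF W_subspace])
    then show "compose W g1 g2 (s a x + y) = s a (compose W g1 g2 x) + compose W g1 g2 y"
      using GL_linear[OF assms(1)] GL_linear[OF assms(2)] GL_mem[OF assms(2)] xy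
      unfolding is_linear_on_def compose_def by simp
  qed
  moreover have "compose W g1 g2 ` Rad = g1 ` g2 ` Rad"
    unfolding image_image by (rule image_cong) (use Rad_subset_W in \<open>auto simp: compose_def\<close>)
  ultimately show ?thesis using GL_Rad[OF assms(1)] GL_Rad[OF assms(2)] unfolding carrier_GL_pres by simp
qed

lemma lift_compose:
  assumes g: "g1 \<in> carrier (GL_pres s W Rad)" "g2 \<in> carrier (GL_pres s W Rad)"
    and h: "h1 \<in> carrier (G_quot s sig eps Lam q W)" "h2 \<in> carrier (G_quot s sig eps Lam q W)"
  shows "lift (compose W g1 g2) (compose quotW h1 h2) v = lift g1 h1 (lift g2 h2 v)"
proof -
  have "compose W g1 g2 (pW v) = g1 (pW (lift g2 h2 v))"
    using lift_components(1)[OF g(2) h(2)] pW_mem by (simp add: compose_def)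
  moreover have "liftC (compose quotW h1 h2) (pC v) = liftC h1 (pC (lift g2 h2 v))"
  proof -
    have c2: "liftC h2 (pC v) \<in> C" "coset (liftC h2 (pC v)) W = h2 (coset (pC v) W)"
      using liftC_coset[OF h(2) pC_orth_W] by auto
    have c1: "liftC h1 (liftC h2 (pC v)) \<in> C"
      "coset (liftC h1 (liftC h2 (pC v))) W = h1 (coset (liftC h2 (pC v)) W)"
      using liftC_coset[OF h(1)] c2(1) C_subset_orth_W by auto
    have "compose quotW h1 h2 (coset (pC v) W) = h1 (h2 (coset (pC v) W))"
      using coset_mem_quotW[OF pC_orth_W] by (simp add: compose_def)
    then have "liftC (compose quotW h1 h2) (pC v) = liftC h1 (liftC h2 (pC v))"
      using c1 c2 by (intro liftC_eqI) simp_all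
    then show ?thesis using lift_components(2)[OF g(2) h(2)] by simp
  qed
  moreover have "dualY (compose W g1 g2) (pY v) = dualY g1 (pY (lift g2 h2 v))"
  proof -
    have "\<forall>w\<in>W. \<omega> (dualY g1 (dualY g2 (pY v))) (compose W g1 g2 w) = \<omega> (pY v) w"
    proof
      fix w assume w: "w \<in> W"
      then have "compose W g1 g2 w = g1 (g2 w)" by (simp add: compose_def)
      then show "\<omega> (dualY g1 (dualY g2 (pY v))) (compose W g1 g2 w) = \<omega> (pY v) w"
        using dualY_omega[OF g(1) GL_mem[OF g(2) w]] dualY_omega[OF g(2) w] by simp
    qed
    then have "dualY (compose W g1 g2) (pY v) = dualY g1 (dualY g2 (pY v))"
      by (rule dualY_eqI[OF compose_mem_GL_pres[OF g] dualY_mem[OF g(1)]])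
    then show ?thesis using lift_components(3)[OF g(2) h(2)] by simp
  qed
  ultimately show ?thesis unfolding lift_def[of "compose W g1 g2"] lift_def[of g1] by simp
qed

end


section \<open>The splitting\<close>

context isotropic_pair
begin

context
  fixes f assumes f: "f \<in> Bij UNIV" "isometry s sig eps Lam q f" "f ` W = W"
begin

lemma stab_bij: "bij f"
  using f(1) unfolding Bij_def by auto

lemma isometry_image_orth_W: "f ` orth W = orth W"
proof -
  have "f d \<in> orth W \<longleftrightarrow> d \<in> orth W" for d
  proof -
    have "(\<forall>w\<in>f ` W. \<omega> (f d) w = 0) \<longleftrightarrow> (\<forall>w\<in>W. \<omega> (f d) (f w) = 0)" by simp
    then show ?thesis unfolding perp_def using isometry_omega[OF f(2)] f(3) by simp
  qed
  then show ?thesis by (rule bij_image_invariant[OF stab_bij])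
qed

lemma induced_coset: "f ` coset x W = coset (f x) W"
  by (rule image_coset[OF isometry_add[OF f(2)] f(3)])

lemma restrict_mem_GL_pres: "restrict f W \<in> carrier (GL_pres s W Rad)"
proof -
  have "bij_betw f W W" using bij_betw_subset[OF stab_bij subset_UNIV, of W] f(3) by simp
  then have "restrict f W \<in> Bij W" unfolding Bij_def by simp
  moreover have "is_linear_on s W (restrict f W)"
    unfolding is_linear_on_def
  proof (intro allI ballI)
    fix a x y assume "x \<in> W" "y \<in> W"
    moreover have "s a x + y \<in> W"
      using calculation by (intro subspace_add[OF W_subspace] subspace_scale[OF W_subspace])
    ultimately show "restrict f W (s a x + y) = s a (restrict f W x) + restrict f W y"
      using isometry_linear[OF f(2)] by simp
  qed
  moreover have "restrict f W ` Rad = f ` Rad" using Rad_subset_W by (auto simp: image_def)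
  ultimately show ?thesis using bij_isometry_image_Rad[OF stab_bij f(2)] unfolding carrier_GL_pres by simp
qed

lemma induced_mem_quotW: "X \<in> quotW \<Longrightarrow> f ` X \<in> quotW"
proof -
  assume "X \<in> quotW"
  then obtain x where x: "x \<in> orth W" "X = coset x W" unfolding mem_quotW_iff by blast
  then have "f x \<in> orth W" using isometry_image_orth_W by blast
  then show "f ` X \<in> quotW" unfolding x(2) induced_coset by (rule coset_mem_quotW)
qed

lemma induced_bij: "bij_betw (\<lambda>X. f ` X) quotW quotW"
  unfolding bij_betw_def
proof
  show "inj_on (\<lambda>X. f ` X) quotW"
    using stab_bij by (auto simp: inj_on_def bij_def inj_image_eq_iff)
  have "X \<in> (\<lambda>X. f ` X) ` quotW" if "X \<in> quotW" for X
  proof -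
    obtain y where y: "y \<in> orth W" "X = coset y W" using \<open>X \<in> quotW\<close> unfolding mem_quotW_iff by blast
    then obtain x where x: "x \<in> orth W" "y = f x" using isometry_image_orth_W by blast
    then have "X = f ` coset x W" using y induced_coset by simp
    then show ?thesis using coset_mem_quotW[OF x(1)] by blast
  qed
  then show "(\<lambda>X. f ` X) ` quotW = quotW" using induced_mem_quotW by blast
qed

lemma induced_rep: "x \<in> orth W \<Longrightarrow> x' \<in> restrict (\<lambda>X. f ` X) quotW (coset x W) \<Longrightarrow> x' - f x \<in> W"
  using coset_mem_quotW induced_coset by (simp add: mem_coset_iff)

lemma induced_quot_linear: "quot_linear s sig eps q W (restrict (\<lambda>X. f ` X) quotW)"
  unfolding quot_linear_def
proof (intro allI impI)
  fix a x y x' y'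
  assume xy: "x \<in> orth W" "y \<in> orth W"
    and "x' \<in> restrict (\<lambda>X. f ` X) quotW (coset x W)" "y' \<in> restrict (\<lambda>X. f ` X) quotW (coset y W)"
  then have d: "x' - f x \<in> W" "y' - f y \<in> W" using induced_rep by auto
  have "s a x + y \<in> orth W"
    using xy by (intro subspace_add[OF orth_subspace] subspace_scale[OF orth_subspace])
  then have "restrict (\<lambda>X. f ` X) quotW (coset (s a x + y) W) = coset (s a (f x) + f y) W"
    using coset_mem_quotW induced_coset isometry_linear[OF f(2)] by simp
  also have "\<dots> = coset (s a x' + y') W"
  proof -
    have "s a (f x) + f y - (s a x' + y') = s a (- (x' - f x)) + (- (y' - f y))"
      by (simp add: algebra_simps)
    also have "\<dots> \<in> W"
      using d by (intro subspace_add[OF W_subspace] subspace_scale[OF W_subspace] subspace_neg[OF W_subspace])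
    finally show ?thesis unfolding coset_eq_iff[OF W_subspace] .
  qed
  finally show "restrict (\<lambda>X. f ` X) quotW (coset (s a x + y) W) = coset (s a x' + y') W" .
qed

lemma induced_quot_isometry: "quot_isometry sig eps Lam q W (restrict (\<lambda>X. f ` X) quotW)"
  unfolding quot_isometry_def
proof (intro allI impI conjI)
  fix x y x' y'
  assume xy: "x \<in> orth W" "y \<in> orth W"
    and "x' \<in> restrict (\<lambda>X. f ` X) quotW (coset x W)" "y' \<in> restrict (\<lambda>X. f ` X) quotW (coset y W)"
  then have d: "x' - f x \<in> W" "y' - f y \<in> W" using induced_rep by auto
  have fxy: "f x \<in> orth W" "f y \<in> orth W" using isometry_image_orth_W xy by auto
  define w1 w2 where "w1 = x' - f x" "w2 = y' - f y"
  have x'_eq: "x' = f x + w1" and y'_eq: "y' = f y + w2" unfolding w1_w2_def by auto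
  have "\<omega> x' y' = \<omega> (f x) (f y) + \<omega> (f x) w2 + \<omega> w1 (f y) + \<omega> w1 w2"
    unfolding x'_eq y'_eq by (simp add: omega_add_left omega_add_right)
  also have "\<dots> = \<omega> x y"
    using isometry_omega[OF f(2)] orth_W_omega[OF fxy(1)] orth_W_omega'[OF fxy(2)] W_omega d
    unfolding w1_w2_def by simp
  finally show "\<omega> x' y' = \<omega> x y" .
  have "q x' x' - q x x = (q (f x + w1) (f x + w1) - (q (f x) (f x) + q w1 w1 + \<omega> (f x) w1))
      + q w1 w1 + (q (f x) (f x) - q x x)"
    using orth_W_omega[OF fxy(1)] d unfolding x'_eq w1_w2_def[symmetric] by (simp add: algebra_simps)
  then show "q x' x' - q x x \<in> Lam"
    using q_add_diag W_q d isometry_q[OF f(2)] Lam_add unfolding w1_w2_def by metis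
qed

lemma induced_mem_G_quot: "restrict (\<lambda>X. f ` X) quotW \<in> carrier (G_quot s sig eps Lam q W)"
  using induced_bij induced_quot_linear induced_quot_isometry unfolding carrier_G_quot Bij_def by simp

end

lemma res_ind_compose:
  assumes "f2 \<in> Bij UNIV" "isometry s sig eps Lam q f2" "f2 ` W = W"
  shows "res_ind sig eps q W (\<lambda>x. f1 (f2 x)) =
    (compose W (restrict f1 W) (restrict f2 W),
     compose quotW (restrict (\<lambda>X. f1 ` X) quotW) (restrict (\<lambda>X. f2 ` X) quotW))"
  using assms(3) induced_mem_quotW[OF assms]
  by (auto simp: res_ind_def compose_def restrict_def fun_eq_iff image_image)

end

lemma (in isotropic_pair) res_ind_hom:
  assumes A: "A \<subseteq> {f \<in> Bij UNIV. isometry s sig eps Lam q f \<and> f ` W = W}"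
    and B: "B \<subseteq> carrier (GL_pres s W Rad)"
    and restrict_mem: "\<And>f. f \<in> A \<Longrightarrow> restrict f W \<in> B"
  shows "res_ind sig eps q W \<in> hom (BijGroup UNIV\<lparr>carrier := A\<rparr>)
    (BijGroup W\<lparr>carrier := B\<rparr> \<times>\<times> G_quot s sig eps Lam q W)"
proof (rule homI)
  fix f assume "f \<in> carrier (BijGroup UNIV\<lparr>carrier := A\<rparr>)"
  then show "res_ind sig eps q W f \<in> carrier (BijGroup W\<lparr>carrier := B\<rparr> \<times>\<times> G_quot s sig eps Lam q W)"
    using A restrict_mem induced_mem_G_quot unfolding res_ind_def by auto
next
  fix f1 f2 assume "f1 \<in> carrier (BijGroup UNIV\<lparr>carrier := A\<rparr>)" "f2 \<in> carrier (BijGroup UNIV\<lparr>carrier := A\<rparr>)"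
  then have f: "f1 \<in> A" "f2 \<in> A" by simp_all
  then have f_props: "f1 \<in> Bij UNIV" "f2 \<in> Bij UNIV" "isometry s sig eps Lam q f2" "f2 ` W = W"
    using A by auto
  have "f1 \<otimes>\<^bsub>BijGroup UNIV\<lparr>carrier := A\<rparr>\<^esub> f2 = (\<lambda>x. f1 (f2 x))"
    using f_props by (simp add: mult_BijGroup compose_def restrict_UNIV)
  moreover have "restrict f1 W \<in> Bij W" "restrict f2 W \<in> Bij W"
    using restrict_mem f B unfolding carrier_GL_pres by auto
  ultimately show "res_ind sig eps q W (f1 \<otimes>\<^bsub>BijGroup UNIV\<lparr>carrier := A\<rparr>\<^esub> f2) =
      res_ind sig eps q W f1 \<otimes>\<^bsub>BijGroup W\<lparr>carrier := B\<rparr> \<times>\<times> G_quot s sig eps Lam q W\<^esub>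
      res_ind sig eps q W f2"
    using res_ind_compose[OF f_props(2-4), of f1] induced_mem_G_quot A f
    by (simp add: res_ind_def mult_BijGroup mult_G_quot subset_iff)
qed

context witt_decomposition
begin

lemma lift_hom:
  assumes B: "B \<subseteq> carrier (GL_pres s W Rad)"
    and lift_mem: "\<And>g h. g \<in> B \<Longrightarrow> h \<in> carrier (G_quot s sig eps Lam q W) \<Longrightarrow> lift g h \<in> A"
  shows "(\<lambda>(g, h). lift g h) \<in> hom (BijGroup W\<lparr>carrier := B\<rparr> \<times>\<times> G_quot s sig eps Lam q W)
    (BijGroup UNIV\<lparr>carrier := A\<rparr>)"
proof (rule homI)
  fix x assume "x \<in> carrier (BijGroup W\<lparr>carrier := B\<rparr> \<times>\<times> G_quot s sig eps Lam q W)"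
  then show "(\<lambda>(g, h). lift g h) x \<in> carrier (BijGroup UNIV\<lparr>carrier := A\<rparr>)"
    using lift_mem by auto
next
  fix x y assume "x \<in> carrier (BijGroup W\<lparr>carrier := B\<rparr> \<times>\<times> G_quot s sig eps Lam q W)"
    "y \<in> carrier (BijGroup W\<lparr>carrier := B\<rparr> \<times>\<times> G_quot s sig eps Lam q W)"
  then obtain g1 h1 g2 h2 where x: "x = (g1, h1)" and y: "y = (g2, h2)"
    and gB: "g1 \<in> B" "g2 \<in> B"
    and h: "h1 \<in> carrier (G_quot s sig eps Lam q W)" "h2 \<in> carrier (G_quot s sig eps Lam q W)"
    by auto
  have g: "g1 \<in> carrier (GL_pres s W Rad)" "g2 \<in> carrier (GL_pres s W Rad)" using gB B by auto
  have "lift g1 h1 \<otimes>\<^bsub>BijGroup UNIV\<lparr>carrier := A\<rparr>\<^esub> lift g2 h2 = (\<lambda>v. lift g1 h1 (lift g2 h2 v))"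
    using lift_mem_Bij[OF g(1) h(1)] lift_mem_Bij[OF g(2) h(2)]
    by (simp add: mult_BijGroup compose_def restrict_UNIV)
  moreover have "g1 \<in> Bij W" "g2 \<in> Bij W" using g unfolding carrier_GL_pres by auto
  ultimately show "(\<lambda>(g, h). lift g h) (x \<otimes>\<^bsub>BijGroup W\<lparr>carrier := B\<rparr> \<times>\<times> G_quot s sig eps Lam q W\<^esub> y) =
      (\<lambda>(g, h). lift g h) x \<otimes>\<^bsub>BijGroup UNIV\<lparr>carrier := A\<rparr>\<^esub> (\<lambda>(g, h). lift g h) y"
    using lift_compose[OF g h] h by (simp add: x y mult_BijGroup mult_G_quot fun_eq_iff)
qed

lemma res_ind_split_surjective:
  assumes A: "A \<subseteq> {f \<in> Bij UNIV. isometry s sig eps Lam q f \<and> f ` W = W}"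
    and B: "B \<subseteq> carrier (GL_pres s W Rad)"
    and restrict_mem: "\<And>f. f \<in> A \<Longrightarrow> restrict f W \<in> B"
    and lift_mem: "\<And>g h. g \<in> B \<Longrightarrow> h \<in> carrier (G_quot s sig eps Lam q W) \<Longrightarrow> lift g h \<in> A"
  shows "split_surjective (BijGroup UNIV\<lparr>carrier := A\<rparr>)
    (BijGroup W\<lparr>carrier := B\<rparr> \<times>\<times> G_quot s sig eps Lam q W) (res_ind sig eps q W)"
  unfolding split_surjective_def
proof (intro conjI bexI[of _ "\<lambda>(g, h). lift g h"] ballI)
  show "res_ind sig eps q W \<in> hom (BijGroup UNIV\<lparr>carrier := A\<rparr>)
      (BijGroup W\<lparr>carrier := B\<rparr> \<times>\<times> G_quot s sig eps Lam q W)"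
    using A B restrict_mem by (rule res_ind_hom)
  show "(\<lambda>(g, h). lift g h) \<in> hom (BijGroup W\<lparr>carrier := B\<rparr> \<times>\<times> G_quot s sig eps Lam q W)
      (BijGroup UNIV\<lparr>carrier := A\<rparr>)"
    using B lift_mem by (rule lift_hom)
  fix y assume "y \<in> carrier (BijGroup W\<lparr>carrier := B\<rparr> \<times>\<times> G_quot s sig eps Lam q W)"
  then obtain g h where "y = (g, h)" "g \<in> carrier (GL_pres s W Rad)" "h \<in> carrier (G_quot s sig eps Lam q W)"
    using B by auto
  then show "res_ind sig eps q W ((\<lambda>(g, h). lift g h) y) = y"
    unfolding res_ind_def using restrict_lift_W induced_quot_lift by simp
qed

end

context formed_vspace
begin

lemma split_surjective_GE_stab:
  assumes "W \<in> Pomega s sig eps Lam q"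
  shows "split_surjective (GE_stab s sig eps Lam q W)
    (GL_pres s W Rad \<times>\<times> G_quot s sig eps Lam q W) (res_ind sig eps q W)"
proof -
  have "isotropic s sig eps Lam q {0}" unfolding isotropic_def using Lam_zero by simp
  then interpret isotropic_pair s sig eps Lam q W "{0}"
    using assms subspace_0[OF orth_subspace] by unfold_locales auto
  obtain C Y where "witt_decomposition s sig eps Lam q W {0} C Y"
    using witt_decomposition_exists by blast
  then interpret witt_decomposition s sig eps Lam q W "{0}" C Y .
  show ?thesis unfolding GE_stab_def GL_pres_def
    by (rule res_ind_split_surjective)
      (auto simp: carrier_GL_pres[symmetric] restrict_mem_GL_pres lift_mem_Bij lift_isometry lift_image_W)
qed

text \<open>The part of \<open>U\<close> complementary to the radical pairs nondegenerately with \<open>W\<close>, because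
  \<open>W + U\<^sup>\<bottom> = E\<close>.\<close>
lemma complement_of_Rad_inter_orth:
  assumes U: "U \<in> Pomega s sig eps Lam q" and W: "W \<in> PomegaU s sig eps Lam q U"
    and U1: "U1 \<subseteq> U" "U1 \<inter> Rad = {0}"
  shows "U1 \<inter> orth W = {0}"
proof -
  have "u = 0" if u: "u \<in> U1" "u \<in> orth W" for u
  proof -
    have "\<omega> x u = 0" for x
    proof -
      obtain w d where wd: "w \<in> W" "d \<in> orth U" "x = w + d" using W unfolding PomegaU_def by blast
      have "\<omega> w u = 0" using u(2) wd(1) omega_eq_0_swap unfolding perp_def by blast
      moreover have "\<omega> d u = 0" using wd(2) u(1) U1(1) unfolding perp_def by blast
      ultimately show ?thesis using wd(3) by (simp add: omega_add_left)
    qed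
    moreover have "q u u \<in> Lam" using U u(1) U1(1) unfolding Pomega_def isotropic_def by blast
    ultimately have "u \<in> Rad" by (rule RadI)
    then show "u = 0" using U1(2) u(1) by blast
  qed
  moreover have "0 \<in> U1 \<inter> orth W" using U1 subspace_0[OF orth_subspace] Rad_subspace U
    unfolding Pomega_def by blast
  ultimately show ?thesis by blast
qed

lemma split_surjective_AEU_stab:
  assumes U: "U \<in> Pomega s sig eps Lam q" and W: "W \<in> PomegaU s sig eps Lam q U"
  shows "split_surjective (AEU_stab s sig eps Lam q U W)
    (AT_id s W (W \<inter> orth U) Rad \<times>\<times> G_quot s sig eps Lam q W) (res_ind sig eps q W)"
proof -
  have U_isotropic: "isotropic s sig eps Lam q U" and Rad_U: "Rad \<subseteq> U"
    using U unfolding Pomega_def by auto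
  have "subspace U" using U_isotropic unfolding isotropic_def by blast
  obtain U1 where U1: "subspace U1" "U1 \<subseteq> U" "U1 \<inter> Rad = {0}" "\<forall>v\<in>U. \<exists>r\<in>Rad. \<exists>u\<in>U1. v = r + u"
    by (rule complement_within[OF Rad_subspace[OF U_isotropic Rad_U] \<open>subspace U\<close>])
  have "isotropic s sig eps Lam q U1" using U_isotropic U1(1,2) unfolding isotropic_def by blast
  then interpret isotropic_pair s sig eps Lam q W U1
    using W complement_of_Rad_inter_orth[OF U W U1(2,3)] unfolding PomegaU_def by unfold_locales auto
  obtain C Y where "witt_decomposition s sig eps Lam q W U1 C Y"
    using witt_decomposition_exists by blast
  then interpret witt_decomposition s sig eps Lam q W U1 C Y .
  let ?B = "{g \<in> Bij W. is_linear_on s W g \<and> (\<forall>w\<in>W. g w - w \<in> W \<inter> orth U) \<and> (\<forall>r\<in>Rad. g r = r)}"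
  have B_GL: "?B \<subseteq> carrier (GL_pres s W Rad)"
    using Rad_subset_W unfolding carrier_GL_pres by (auto simp: image_iff)
  show ?thesis unfolding AEU_stab_def AT_id_def
  proof (rule res_ind_split_surjective[OF _ B_GL])
    fix f assume f: "f \<in> {f \<in> Bij UNIV. isometry s sig eps Lam q f \<and> (\<forall>u\<in>U. f u = u) \<and> f ` W = W}"
    have "f w - w \<in> W \<inter> orth U" if w: "w \<in> W" for w
    proof
      have "f w \<in> W" using f w by blast
      then show "f w - w \<in> W" using subspace_diff[OF W_subspace _ w] by blast
      have "\<omega> (f w) u = \<omega> w u" if "u \<in> U" for u using isometry_omega[of f w u] f that by auto
      then show "f w - w \<in> orth U" unfolding perp_def by (simp add: omega_diff_left)
    qed
    then show "restrict f W \<in> ?B"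
      using f restrict_mem_GL_pres Rad_U Rad_subset_W unfolding carrier_GL_pres by auto
  next
    fix g h assume g: "g \<in> ?B" and h: "h \<in> carrier (G_quot s sig eps Lam q W)"
    have g_GL: "g \<in> carrier (GL_pres s W Rad)" using g B_GL by blast
    have "\<forall>w\<in>W. g w - w \<in> orth U" "\<forall>r\<in>Rad. g r = r" using g by auto
    then have "\<forall>u\<in>U. lift g h u = u" using lift_fixes[OF g_GL h _ _ U1(2) _ U1(4)] by blast
    then show "lift g h \<in> {f \<in> Bij UNIV. isometry s sig eps Lam q f \<and> (\<forall>u\<in>U. f u = u) \<and> f ` W = W}"
      using lift_mem_Bij[OF g_GL h] lift_isometry[OF g_GL h] lift_image_W[OF g_GL h] by blast
  qed auto
qed

end

theorem proposition5p5:
  fixes s :: "'k::field \<Rightarrow> 'v::ab_group_add \<Rightarrow> 'v"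
    and sig :: "'k \<Rightarrow> 'k" and eps :: 'k and Lam :: "'k set"
    and q :: "'v \<Rightarrow> 'v \<Rightarrow> 'k"
  assumes "formed_space s sig eps Lam q"
  shows "(\<forall>W \<in> Pomega s sig eps Lam q.
            split_surjective (GE_stab s sig eps Lam q W)
              (GL_pres s W (radical sig eps Lam q) \<times>\<times> G_quot s sig eps Lam q W)
              (res_ind sig eps q W))
       \<and> (\<forall>U \<in> Pomega s sig eps Lam q. \<forall>W \<in> PomegaU s sig eps Lam q U.
            split_surjective (AEU_stab s sig eps Lam q U W)
              (AT_id s W (W \<inter> perp sig eps q U) (radical sig eps Lam q) \<times>\<times> G_quot s sig eps Lam q W)
              (res_ind sig eps q W))"
proof -
  interpret formed_vspace s sig eps Lam q using assms by (rule formed_vspace.intro)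
  show ?thesis using split_surjective_GE_stab split_surjective_AEU_stab by blast
qed

end
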